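(* Let $f\in F$. Then $\ell(x_0^{-1}f)<\ell(f)$ if and only if one of the following holds: (1) the reduced forest diagram of $x_0^{-1}f$ has smaller support than that of $f$; (2) the left space of $f$ has label pair $(L,L)$; (3) the left space of $f$ has label pair $(L,I)$ and the current tree of $f$ is trivial.
   Context: Thompson's group $F$ is realized as the group of all orientation-preserving piecewise-linear homeomorphisms $f$ of $\mathbb R$ with finitely many breakpoints, all breakpoints having dyadic rational coordinates, all slopes integral powers of $2$, and with $f(t)=t-m$ for all sufficiently negative $t$ and $f(t)=t-n$ for all sufficiently positive $t$, for some integers $m,n$. Products are compositions of functions: $fg=f\circ g$. The generators are $x_0(t)=t-1$ and $x_1(t)=t$ for $t\le 0$, $x_1(t)=t/2$ for $0\le t\le 2$, $x_1(t)=t-1$ for $t\ge 2$. A forest diagram for $x_0^{-1}f$ is obtained from one for $f$ by moving the top pointer one tree to the left. Forest diagrams: a binary forest is a sequence $(T_i)_{i\in\mathbb Z}$ of finite rooted binary trees (every node has $0$ or $2$ children; internal nodes are called carets; a trivial tree is a single leaf), all but finitely many trivial, together with a pointer marking $T_0$. Tree $T_i$ represents the interval $[i,i+1]$, each caret represents halving the interval of its node, and the leaves of the forest give a dyadic subdivision of $\mathbb R$. A forest diagram for $f$ is a pair of binary forests, the bottom (domain) forest with subdivision $\mathcal D$ and the top (range) forest with subdivision $\mathcal R$, such that $f$ maps each interval of $\mathcal D$ linearly onto an interval of $\mathcal R$; this matches the leaves of the two forests by an order-preserving bijection, so the two forests share one linearly ordered set of leaves (columns). A reduction deletes an opposing pair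 of carets, i.e. a top caret and a bottom caret both of whose children are leaves and which have the same two (matched) leaves. A forest diagram is reduced if no reduction is possible; every element of $F$ has a unique reduced forest diagram. The support of a forest diagram is the smallest set of consecutive columns containing all leaves of nontrivial trees of either forest and the leaves of the two trees marked by the two pointers. A space is a gap between two consecutive columns; the spaces in the support are the gaps between consecutive columns of the support. The current tree of $f$ is the tree of the top forest (of the reduced diagram) marked by the top pointer; the right (resp. left) space of $f$ is the space immediately to the right (resp. left) of the current tree. Labels: in each of the two forests separately (using that forest's own pointer), a space is interior if the leaves on both sides of it belong to the same tree and exterior otherwise; it lies immediately to the left of a caret $c$ of that forest if the leaf immediately to its right is the leftmost leaf descending from $c$. Each space of the support receives a label in each forest: $L$ if it is exterior and to the left of the tree marked by the pointer; otherwise $N$ if it lies immediately to the left of some caret; otherwise $R$ if it is exterior (hence to the right of the marked tree); otherwise $I$ (interior). A space thus has a label pair (top label, bottom label); spaces outside the support are unlabeled. Weights, by (top, bottom): $(L,L)=2$, $(L,N)=1$, $(L,R)=1$, $(L,I)=1$; $(N,L)=1$, $(N,N)=2$, $(N,R)=2$, $(N,I)=2$; $(R,L)=1$, $(R,N)=2$, $(R,R)=2$, $(R,I)=0$; $(I,L)=1$, $(I,N)=2$, $(I,R)=0$, $(I,I)=0$. For $f\in F$, $\ell(f)=\ell_0(f)+\ell_1(f)$, where $\ell_0(f)$ is the sum of the weights of the spaces in the support of the reduced forest diagram of $f$ and $\ell_1(f)$ is its total number of carets; $\ell(f)$ equals the word length of $f$ with respect to $\{x_0,x_1\}$. *)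

theory Defs
  imports Complex_Main
begin

definition dyadic :: "real \<Rightarrow> bool" where
  "dyadic x \<longleftrightarrow> (\<exists>k::int. \<exists>n::nat. x = of_int k / 2 ^ n)"

definition thompsonF :: "(real \<Rightarrow> real) set" where
  "thompsonF = {f. strict_mono f \<and> surj f \<and> continuous_on UNIV f \<and>
     (\<exists>P. finite P \<and> (\<forall>x\<in>P. dyadic x \<and> dyadic (f x)) \<and>
        (\<forall>a b. a < b \<and> {a<..<b} \<inter> P = {} \<longrightarrow>
           (\<exists>k::int. \<exists>c. \<forall>t\<in>{a<..<b}. f t = 2 powi k * t + c))) \<and>
     (\<exists>m n :: int. \<exists>a b. (\<forall>t\<le>a. f t = t - of_int m) \<and> (\<forall>t\<ge>b. f t = t - of_int n))}"

definition x0 :: "real \<Rightarrow> real" where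
  "x0 t = t - 1"

definition x1 :: "real \<Rightarrow> real" where
  "x1 t = (if t \<le> 0 then t else if t \<le> 2 then t / 2 else t - 1)"

datatype tree = Leaf | Node tree tree

text \<open>Leaf intervals, caret intervals and carets with two leaf children, of a tree
  drawn over the interval [a,b] (each caret halves the interval of its node).\<close>
fun leaves :: "real \<Rightarrow> real \<Rightarrow> tree \<Rightarrow> (real \<times> real) set" where
  "leaves a b Leaf = {(a, b)}"
| "leaves a b (Node l r) = leaves a ((a + b) / 2) l \<union> leaves ((a + b) / 2) b r"

fun carets :: "real \<Rightarrow> real \<Rightarrow> tree \<Rightarrow> (real \<times> real) set" where
  "carets a b Leaf = {}"
| "carets a b (Node l r) = insert (a, b) (carets a ((a + b) / 2) l \<union> carets ((a + b) / 2) b r)"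

fun elem_carets :: "real \<Rightarrow> real \<Rightarrow> tree \<Rightarrow> (real \<times> real) set" where
  "elem_carets a b Leaf = {}"
| "elem_carets a b (Node l r) =
     (if l = Leaf \<and> r = Leaf then {(a, b)} else {}) \<union>
     elem_carets a ((a + b) / 2) l \<union> elem_carets ((a + b) / 2) b r"

fun ncarets :: "tree \<Rightarrow> nat" where
  "ncarets Leaf = 0"
| "ncarets (Node l r) = Suc (ncarets l + ncarets r)"

text \<open>A binary forest: trees indexed by the integers, tree i drawn over [i,i+1],
  all but finitely many trivial; the pointer always marks tree 0.\<close>
type_synonym forest = "int \<Rightarrow> tree"

definition is_forest :: "forest \<Rightarrow> bool" where
  "is_forest F \<longleftrightarrow> finite {i. F i \<noteq> Leaf}"

definition fleaves :: "forest \<Rightarrow> (real \<times> real) set" where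
  "fleaves F = (\<Union>i. leaves (of_int i) (of_int i + 1) (F i))"

definition fcarets :: "forest \<Rightarrow> (real \<times> real) set" where
  "fcarets F = (\<Union>i. carets (of_int i) (of_int i + 1) (F i))"

definition felem_carets :: "forest \<Rightarrow> (real \<times> real) set" where
  "felem_carets F = (\<Union>i. elem_carets (of_int i) (of_int i + 1) (F i))"

definition fncarets :: "forest \<Rightarrow> nat" where
  "fncarets F = (\<Sum>i\<in>{i. F i \<noteq> Leaf}. ncarets (F i))"

text \<open>(B,T): bottom (domain) forest B, top (range) forest T; f maps each leaf
  interval of B linearly onto a leaf interval of T.\<close>
definition forest_diagram :: "(real \<Rightarrow> real) \<Rightarrow> forest \<Rightarrow> forest \<Rightarrow> bool" where
  "forest_diagram f B T \<longleftrightarrow> is_forest B \<and> is_forest T \<and>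
     (\<forall>(a, b)\<in>fleaves B. (f a, f b) \<in> fleaves T \<and> (\<exists>s c. \<forall>t\<in>{a..b}. f t = s * t + c))"

text \<open>No opposing pair of carets: a bottom caret with two leaf children whose
  matched leaves are the two leaf children of a top caret.\<close>
definition reduced :: "(real \<Rightarrow> real) \<Rightarrow> forest \<Rightarrow> forest \<Rightarrow> bool" where
  "reduced f B T \<longleftrightarrow> \<not> (\<exists>(a, b)\<in>felem_carets B. (f a, f b) \<in> felem_carets T)"

definition reduced_diagram :: "(real \<Rightarrow> real) \<Rightarrow> forest \<times> forest" where
  "reduced_diagram f = (THE (B, T). forest_diagram f B T \<and> reduced f B T)"

definition bottom_forest :: "(real \<Rightarrow> real) \<Rightarrow> forest" where
  "bottom_forest f = fst (reduced_diagram f)"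

definition top_forest :: "(real \<Rightarrow> real) \<Rightarrow> forest" where
  "top_forest f = snd (reduced_diagram f)"

text \<open>Spaces are identified with the domain points separating consecutive columns
  (left endpoints of leaf intervals of the bottom forest); the same space sits at
  the point f p in the top forest.\<close>
definition spaces :: "forest \<Rightarrow> real set" where
  "spaces B = {a. \<exists>b. (a, b) \<in> fleaves B}"

text \<open>Support, in domain coordinates, is the interval [supp_lo, supp_hi]: the convex
  hull of the columns of nontrivial trees of either forest and of the two pointer trees.\<close>
definition supp_lo :: "(real \<Rightarrow> real) \<Rightarrow> forest \<Rightarrow> forest \<Rightarrow> real" where
  "supp_lo f B T = Min ({0, inv f 0} \<union> {of_int i | i. B i \<noteq> Leaf}
                     \<union> {inv f (of_int j) | j. T j \<noteq> Leaf})"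

definition supp_hi :: "(real \<Rightarrow> real) \<Rightarrow> forest \<Rightarrow> forest \<Rightarrow> real" where
  "supp_hi f B T = Max ({1, inv f 1} \<union> {of_int i + 1 | i. B i \<noteq> Leaf}
                     \<union> {inv f (of_int j + 1) | j. T j \<noteq> Leaf})"

definition support_spaces :: "(real \<Rightarrow> real) \<Rightarrow> forest \<Rightarrow> forest \<Rightarrow> real set" where
  "support_spaces f B T = {p \<in> spaces B. supp_lo f B T < p \<and> p < supp_hi f B T}"

definition support_columns :: "(real \<Rightarrow> real) \<Rightarrow> forest \<Rightarrow> forest \<Rightarrow> (real \<times> real) set" where
  "support_columns f B T = {(a, b) \<in> fleaves B. supp_lo f B T \<le> a \<and> b \<le> supp_hi f B T}"

definition support_size :: "(real \<Rightarrow> real) \<Rightarrow> nat" where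
  "support_size f = card (support_columns f (bottom_forest f) (top_forest f))"

datatype label = L | N | R | I

text \<open>Label of the space at point p of a forest (pointer at tree 0 = [0,1]).
  Exterior spaces are exactly those at integer points.\<close>
definition label :: "forest \<Rightarrow> real \<Rightarrow> label" where
  "label F p = (if p \<in> \<int> \<and> p \<le> 0 then L
                else if (\<exists>b. (p, b) \<in> fcarets F) then N
                else if p \<in> \<int> then R
                else I)"

fun weight :: "label \<Rightarrow> label \<Rightarrow> nat" where
  "weight L L = 2" | "weight L N = 1" | "weight L R = 1" | "weight L I = 1"
| "weight N L = 1" | "weight N N = 2" | "weight N R = 2" | "weight N I = 2"
| "weight R L = 1" | "weight R N = 2" | "weight R R = 2" | "weight R I = 0"
| "weight I L = 1" | "weight I N = 2" | "weight I R = 0" | "weight I I = 0"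

definition label_pair :: "(real \<Rightarrow> real) \<Rightarrow> real \<Rightarrow> (label \<times> label) option" where
  "label_pair f p = (if p \<in> support_spaces f (bottom_forest f) (top_forest f)
                      then Some (label (top_forest f) (f p), label (bottom_forest f) p) else None)"

definition ell0 :: "(real \<Rightarrow> real) \<Rightarrow> nat" where
  "ell0 f = (\<Sum>p\<in>support_spaces f (bottom_forest f) (top_forest f).
               weight (label (top_forest f) (f p)) (label (bottom_forest f) p))"

definition ell1 :: "(real \<Rightarrow> real) \<Rightarrow> nat" where
  "ell1 f = fncarets (top_forest f) + fncarets (bottom_forest f)"

definition ell :: "(real \<Rightarrow> real) \<Rightarrow> nat" where
  "ell f = ell0 f + ell1 f"

text \<open>Left space of f: the space immediately left of the current tree (top tree 0,
  range interval [0,1]); in domain coordinates it is at inv f 0.\<close>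
definition left_space :: "(real \<Rightarrow> real) \<Rightarrow> real" where
  "left_space f = inv f 0"

definition current_tree :: "(real \<Rightarrow> real) \<Rightarrow> tree" where
  "current_tree f = top_forest f 0"

end

theory Submission
  imports Defs "HOL-Analysis.Abstract_Topology_2"
begin

text \<open>
  The bottom leaves of a reduced forest diagram of f are exactly the maximal standard dyadic
  intervals that f maps linearly onto standard dyadic intervals; this makes the reduced diagram
  unique, and subdividing greedily to a uniform dyadic level produces it.

  Composing with the translation inv x0 = (\<lambda>t. t + 1) keeps the bottom forest and shifts the
  top forest by one tree. In domain coordinates the spaces, the carets and all labels therefore
  stay the same, except the top label of the left space g 0 (g = inv f), which changes from L to
  N or R. The support can only change at its ends: it gains the column left of g 0 when g 0 is
  its left end, or loses the column [g 0, g 1] when g 1 is its right end and the current tree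
  is trivial. Comparing the sums of weights in these three cases, using that every weight
  (L, _) is at least 1, gives the criterion.
\<close>

section \<open>Standard dyadic intervals\<close>

definition dyadic_interval :: "real \<Rightarrow> real \<Rightarrow> bool" where
  "dyadic_interval a b \<longleftrightarrow> (\<exists>(k::int) (n::nat). a = of_int k / 2 ^ n \<and> b = (of_int k + 1) / 2 ^ n)"

lemma dyadic_interval_iff: "dyadic_interval a b \<longleftrightarrow> (\<exists>n. b - a = 1 / 2 ^ n \<and> a * 2 ^ n \<in> \<int>)"
proof
  assume "dyadic_interval a b"
  then obtain k n where "a = of_int k / 2 ^ n" "b = (of_int k + 1) / 2 ^ n"
    unfolding dyadic_interval_def by blast
  then have "b - a = 1 / 2 ^ n \<and> a * 2 ^ n \<in> \<int>" by (simp add: field_simps)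
  then show "\<exists>n. b - a = 1 / 2 ^ n \<and> a * 2 ^ n \<in> \<int>" ..
next
  assume "\<exists>n. b - a = 1 / 2 ^ n \<and> a * 2 ^ n \<in> \<int>"
  then obtain n k where "b - a = 1 / 2 ^ n" "a * 2 ^ n = of_int k" by (auto elim: Ints_cases)
  then have "a = of_int k / 2 ^ n \<and> b = (of_int k + 1) / 2 ^ n" by (simp add: field_simps)
  then show "dyadic_interval a b" unfolding dyadic_interval_def by blast
qed

lemma dyadic_interval_less: "dyadic_interval a b \<Longrightarrow> a < b"
  unfolding dyadic_interval_def by (auto simp: divide_strict_right_mono)

lemma dyadic_interval_unit: "dyadic_interval (of_int i) (of_int i + 1)"
  unfolding dyadic_interval_def by (rule exI[of _ i], rule exI[of _ 0]) simp

lemma dyadic_interval_halves: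
  assumes "dyadic_interval a b"
  shows "dyadic_interval a ((a + b) / 2)" "dyadic_interval ((a + b) / 2) b"
proof -
  obtain k n where kn: "a = of_int k / 2 ^ n" "b = (of_int k + 1) / 2 ^ n"
    using assms unfolding dyadic_interval_def by blast
  have "a = of_int (2 * k) / 2 ^ Suc n \<and> (a + b) / 2 = (of_int (2 * k) + 1) / 2 ^ Suc n"
    using kn by (simp add: field_simps)
  then show "dyadic_interval a ((a + b) / 2)" unfolding dyadic_interval_def by blast
  have "(a + b) / 2 = of_int (2 * k + 1) / 2 ^ Suc n \<and> b = (of_int (2 * k + 1) + 1) / 2 ^ Suc n"
    using kn by (simp add: field_simps)
  then show "dyadic_interval ((a + b) / 2) b" unfolding dyadic_interval_def by blast
qed

lemma Ints_less_add_one_imp_le: "x \<in> \<int> \<Longrightarrow> y \<in> \<int> \<Longrightarrow> x < y + 1 \<Longrightarrow> (x::real) \<le> y"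
  by (elim Ints_cases) simp

text \<open>Scaled by the finer of the two denominators, all four endpoints become integers
  and the shorter interval has length 1.\<close>
lemma dyadic_interval_nested_finer:
  fixes a b c d :: real
  assumes "b - a = 1 / 2 ^ m" "a * 2 ^ m \<in> \<int>" "d - c = 1 / 2 ^ n" "c * 2 ^ n \<in> \<int>"
    and "m \<le> n" "a < d" "c < b"
  shows "a \<le> c \<and> d \<le> b"
proof -
  obtain e where n: "n = m + e" using \<open>m \<le> n\<close> le_Suc_ex by blast
  have two_pow: "(2::real) ^ e \<in> \<int>" by simp
  have A: "a * 2 ^ n \<in> \<int>" unfolding n power_add mult.assoc[symmetric] using assms(2) two_pow by simp
  have b: "b * 2 ^ m = a * 2 ^ m + 1" using assms(1) by (simp add: field_simps)
  have B: "b * 2 ^ n = a * 2 ^ n + 2 ^ e"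
    unfolding n power_add by (simp only: mult.assoc[symmetric] b) (simp add: algebra_simps)
  have D: "d * 2 ^ n = c * 2 ^ n + 1" using assms(3) by (simp add: field_simps)
  have "a * 2 ^ n < c * 2 ^ n + 1" "c * 2 ^ n < (a * 2 ^ n + 2 ^ e - 1) + 1"
    using assms(6,7) by (simp_all flip: D B)
  then have "a * 2 ^ n \<le> c * 2 ^ n" "c * 2 ^ n \<le> a * 2 ^ n + 2 ^ e - 1"
    using A assms(4) two_pow by (intro Ints_less_add_one_imp_le Ints_diff Ints_add; simp)+
  moreover from this(2) have "d * 2 ^ n \<le> b * 2 ^ n" using B D by linarith
  ultimately show ?thesis by simp
qed

lemma dyadic_interval_nested:
  assumes "dyadic_interval a b" "dyadic_interval c d" "a < d" "c < b"
  shows "(c \<le> a \<and> b \<le> d) \<or> (a \<le> c \<and> d \<le> b)"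
proof -
  obtain m where m: "b - a = 1 / 2 ^ m" "a * 2 ^ m \<in> \<int>" using assms(1) dyadic_interval_iff by blast
  obtain n where n: "d - c = 1 / 2 ^ n" "c * 2 ^ n \<in> \<int>" using assms(2) dyadic_interval_iff by blast
  show ?thesis
  proof (cases "m \<le> n")
    case True
    then show ?thesis using dyadic_interval_nested_finer[OF m n] assms(3,4) by blast
  next
    case False
    then show ?thesis using dyadic_interval_nested_finer[OF n m] assms(3,4) by simp
  qed
qed

lemma dyadic_interval_within_unit:
  assumes "dyadic_interval a b"
  shows "of_int \<lfloor>a\<rfloor> \<le> a \<and> b \<le> of_int \<lfloor>a\<rfloor> + 1"
proof -
  obtain n where "b - a = 1 / 2 ^ n" using assms dyadic_interval_iff by blast
  then have "b - a \<le> 1" by simp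
  moreover have "a < of_int \<lfloor>a\<rfloor> + 1" "of_int \<lfloor>a\<rfloor> < b"
    using dyadic_interval_less[OF assms] by linarith+
  ultimately show ?thesis
    using dyadic_interval_nested[OF assms dyadic_interval_unit, of "\<lfloor>a\<rfloor>"] by linarith
qed

lemma dyadic_interval_sub_half:
  assumes "dyadic_interval a b" "dyadic_interval c d" "a \<le> c" "d \<le> b" "(c, d) \<noteq> (a, b)"
  shows "d \<le> (a + b) / 2 \<or> (a + b) / 2 \<le> c"
proof (rule ccontr)
  assume "\<not> ?thesis"
  then have mid: "c < (a + b) / 2" "(a + b) / 2 < d" by auto
  from dyadic_interval_nested[OF dyadic_interval_halves(2)[OF assms(1)] assms(2)] mid assms(4)
  have "b \<le> d" by auto
  moreover from dyadic_interval_nested[OF dyadic_interval_halves(1)[OF assms(1)] assms(2)]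
    mid assms(3)
  have "c \<le> a" by auto
  ultimately show False using assms(3,4,5) by auto
qed

section \<open>Geometry of a single tree\<close>

lemma leaves_bounds: "(c, d) \<in> leaves a b t \<Longrightarrow> a < b \<Longrightarrow> a \<le> c \<and> c < d \<and> d \<le> b"
proof (induction t arbitrary: a b)
  case (Node l r)
  from Node.prems have "(c, d) \<in> leaves a ((a + b) / 2) l \<or> (c, d) \<in> leaves ((a + b) / 2) b r"
    by simp
  then show ?case using Node.IH Node.prems(2) by fastforce
qed simp

lemma carets_bounds: "(c, d) \<in> carets a b t \<Longrightarrow> a < b \<Longrightarrow> a \<le> c \<and> c < d \<and> d \<le> b"
proof (induction t arbitrary: a b)
  case (Node l r)
  from Node.prems have "(c, d) = (a, b) \<or> (c, d) \<in> carets a ((a + b) / 2) l \<or>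
      (c, d) \<in> carets ((a + b) / 2) b r"
    by simp
  then show ?case using Node.IH Node.prems(2) by fastforce
qed simp

lemma elem_carets_subset_carets: "elem_carets a b t \<subseteq> carets a b t"
proof (induction t arbitrary: a b)
  case (Node l r)
  have "elem_carets a ((a + b) / 2) l \<subseteq> carets a ((a + b) / 2) l"
    "elem_carets ((a + b) / 2) b r \<subseteq> carets ((a + b) / 2) b r" by (rule Node.IH)+
  then show ?case by auto
qed simp

lemma elem_carets_halves_in_leaves:
  "(c, d) \<in> elem_carets a b t \<Longrightarrow> (c, (c + d) / 2) \<in> leaves a b t \<and> ((c + d) / 2, d) \<in> leaves a b t"
  by (induction t arbitrary: a b) (auto split: if_splits)

lemma leaves_cover: "a \<le> x \<Longrightarrow> x < b \<Longrightarrow> \<exists>(c, d)\<in>leaves a b t. c \<le> x \<and> x < d"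
proof (induction t arbitrary: a b)
  case (Node l r)
  show ?case
  proof (cases "x < (a + b) / 2")
    case True
    then show ?thesis using Node.IH(1)[of a "(a + b) / 2"] Node.prems by auto
  next
    case False
    then show ?thesis using Node.IH(2)[of "(a + b) / 2" b] Node.prems by auto
  qed
qed simp

lemma leaves_Node_split:
  assumes "a < b"
  shows "leaves a ((a + b) / 2) l = {p \<in> leaves a b (Node l r). snd p \<le> (a + b) / 2}"
    and "leaves ((a + b) / 2) b r = {p \<in> leaves a b (Node l r). (a + b) / 2 \<le> fst p}"
proof -
  have m: "a < (a + b) / 2" "(a + b) / 2 < b" using assms by auto
  have "snd p \<le> (a + b) / 2 \<and> \<not> (a + b) / 2 \<le> fst p" if "p \<in> leaves a ((a + b) / 2) l" for p
    using leaves_bounds[of "fst p" "snd p" a "(a + b) / 2" l] that m by auto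
  moreover have "(a + b) / 2 \<le> fst p \<and> \<not> snd p \<le> (a + b) / 2"
    if "p \<in> leaves ((a + b) / 2) b r" for p
    using leaves_bounds[of "fst p" "snd p" "(a + b) / 2" b r] that m by auto
  ultimately show "leaves a ((a + b) / 2) l = {p \<in> leaves a b (Node l r). snd p \<le> (a + b) / 2}"
    and "leaves ((a + b) / 2) b r = {p \<in> leaves a b (Node l r). (a + b) / 2 \<le> fst p}"
    by auto
qed

lemma leaves_unique:
  "(c1, d1) \<in> leaves a b t \<Longrightarrow> (c2, d2) \<in> leaves a b t \<Longrightarrow> a < b \<Longrightarrow>
   c1 \<le> x \<Longrightarrow> x < d1 \<Longrightarrow> c2 \<le> x \<Longrightarrow> x < d2 \<Longrightarrow> c1 = c2 \<and> d1 = d2"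
proof (induction t arbitrary: a b)
  case (Node l r)
  let ?m = "(a + b) / 2"
  have m: "a < ?m" "?m < b" using Node.prems(3) by auto
  have side: "(c, d) \<in> leaves a ?m l \<and> d \<le> ?m \<or> (c, d) \<in> leaves ?m b r \<and> ?m \<le> c"
    if "(c, d) \<in> leaves a b (Node l r)" for c d
    using that leaves_bounds[of c d a ?m l] leaves_bounds[of c d ?m b r] m by auto
  from side[OF Node.prems(1)] side[OF Node.prems(2)] show ?case
  proof (elim disjE conjE)
    assume "(c1, d1) \<in> leaves a ?m l" "(c2, d2) \<in> leaves a ?m l"
    from Node.IH(1)[OF this m(1) Node.prems(4-7)] show ?thesis .
  next
    assume "(c1, d1) \<in> leaves ?m b r" "(c2, d2) \<in> leaves ?m b r"
    from Node.IH(2)[OF this m(2) Node.prems(4-7)] show ?thesis .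
  qed (use Node.prems(4-7) in linarith)+
qed simp

lemma finite_leaves: "finite (leaves a b t)"
  by (induction t arbitrary: a b) auto

lemma leaves_translate:
  "leaves (a + s) (b + s) t = (\<lambda>(x, y). (x + s, y + s)) ` leaves a b t"
proof (induction t arbitrary: a b)
  case (Node l r)
  have m: "(a + s + (b + s)) / 2 = (a + b) / 2 + s" by (simp add: field_simps)
  show ?case by (simp only: leaves.simps m Node.IH image_Un)
qed simp

lemma carets_translate:
  "carets (a + s) (b + s) t = (\<lambda>(x, y). (x + s, y + s)) ` carets a b t"
proof (induction t arbitrary: a b)
  case (Node l r)
  have m: "(a + s + (b + s)) / 2 = (a + b) / 2 + s" by (simp add: field_simps)
  show ?case unfolding carets.simps m Node.IH by (simp add: image_Un)
qed simp

lemma elem_carets_translate: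
  "elem_carets (a + s) (b + s) t = (\<lambda>(x, y). (x + s, y + s)) ` elem_carets a b t"
proof (induction t arbitrary: a b)
  case (Node l r)
  have m: "(a + s + (b + s)) / 2 = (a + b) / 2 + s" by (simp add: field_simps)
  show ?case unfolding elem_carets.simps m Node.IH by (simp add: image_Un)
qed simp

lemma root_in_leaves_iff: "a < b \<Longrightarrow> (a, b) \<in> leaves a b t \<longleftrightarrow> t = Leaf"
proof (cases t)
  case (Node l r)
  assume "a < b"
  then show ?thesis
    using Node leaves_bounds[of a b a "(a + b) / 2" l] leaves_bounds[of a b "(a + b) / 2" b r]
    by auto
qed simp

lemma leaves_inj: "a < b \<Longrightarrow> leaves a b t1 = leaves a b t2 \<Longrightarrow> t1 = t2"
proof (induction t1 arbitrary: a b t2)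
  case Leaf
  then have "(a, b) \<in> leaves a b t2" by (metis insertI1 leaves.simps(1))
  then show ?case using root_in_leaves_iff[OF Leaf.prems(1)] by simp
next
  case (Node l r)
  show ?case
  proof (cases t2)
    case Leaf
    then have "(a, b) \<in> leaves a b (Node l r)" using Node.prems(2) by simp
    then show ?thesis
      using root_in_leaves_iff[OF Node.prems(1), of "Node l r"] tree.distinct by metis
  next
    case (Node l2 r2)
    have m: "a < (a + b) / 2" "(a + b) / 2 < b" using Node.prems(1) by auto
    have same: "leaves a b (Node l r) = leaves a b (Node l2 r2)"
      using Node.prems(2) \<open>t2 = Node l2 r2\<close> by (simp only:)
    have "leaves a ((a + b) / 2) l = leaves a ((a + b) / 2) l2"
      by (metis leaves_Node_split(1)[OF Node.prems(1)] same)
    moreover have "leaves ((a + b) / 2) b r = leaves ((a + b) / 2) b r2"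
      by (metis leaves_Node_split(2)[OF Node.prems(1)] same)
    ultimately show ?thesis using Node.IH(1)[OF m(1)] Node.IH(2)[OF m(2)] \<open>t2 = Node l2 r2\<close> by simp
  qed
qed

lemma root_in_carets: "t \<noteq> Leaf \<Longrightarrow> (a, b) \<in> carets a b t"
  by (cases t) auto

lemma elem_caret_below_root:
  "t \<noteq> Leaf \<Longrightarrow> a < b \<Longrightarrow> \<exists>(c, d)\<in>elem_carets a b t. a \<le> c \<and> d \<le> b"
proof (induction t arbitrary: a b)
  case (Node l r)
  let ?m = "(a + b) / 2"
  have m: "a < ?m" "?m < b" using Node.prems(2) by auto
  consider "l = Leaf" "r = Leaf" | "l \<noteq> Leaf" | "l = Leaf" "r \<noteq> Leaf" by blast
  then show ?case
  proof cases
    case 1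
    then show ?thesis by auto
  next
    case 2
    then obtain c d where "(c, d) \<in> elem_carets a ?m l" "a \<le> c" "d \<le> ?m"
      using Node.IH(1)[OF _ m(1)] by blast
    then show ?thesis using m by (intro bexI[of _ "(c, d)"]) auto
  next
    case 3
    then obtain c d where "(c, d) \<in> elem_carets ?m b r" "?m \<le> c" "d \<le> b"
      using Node.IH(2)[OF _ m(2)] by blast
    then show ?thesis using m by (intro bexI[of _ "(c, d)"]) auto
  qed
qed simp

lemma elem_caret_below_caret:
  "(c, d) \<in> carets a b t \<Longrightarrow> a < b \<Longrightarrow> \<exists>(e1, e2)\<in>elem_carets a b t. c \<le> e1 \<and> e2 \<le> d"
proof (induction t arbitrary: a b)
  case (Node l r)
  let ?m = "(a + b) / 2"
  have m: "a < ?m" "?m < b" using Node.prems(2) by auto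
  have sub: "elem_carets a ?m l \<subseteq> elem_carets a b (Node l r)"
    "elem_carets ?m b r \<subseteq> elem_carets a b (Node l r)" by auto
  from Node.prems(1)
  consider "(c, d) = (a, b)" | "(c, d) \<in> carets a ?m l" | "(c, d) \<in> carets ?m b r"
    by auto
  then show ?case
  proof cases
    case 1
    then show ?thesis using elem_caret_below_root[OF _ Node.prems(2), of "Node l r"] by auto
  next
    case 2
    then show ?thesis using Node.IH(1)[OF _ m(1)] sub(1) by blast
  next
    case 3
    then show ?thesis using Node.IH(2)[OF _ m(2)] sub(2) by blast
  qed
qed simp

lemma leaves_dyadic: "dyadic_interval a b \<Longrightarrow> (c, d) \<in> leaves a b t \<Longrightarrow> dyadic_interval c d"
proof (induction t arbitrary: a b)
  case (Node l r)
  then show ?case using dyadic_interval_halves[OF Node.prems(1)] Node.IH by auto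
qed simp

lemma carets_dyadic: "dyadic_interval a b \<Longrightarrow> (c, d) \<in> carets a b t \<Longrightarrow> dyadic_interval c d"
proof (induction t arbitrary: a b)
  case (Node l r)
  then show ?case using dyadic_interval_halves[OF Node.prems(1)] Node.IH by auto
qed simp

lemma dyadic_interval_above_leaf_in_carets:
  "dyadic_interval u v \<Longrightarrow> (c, d) \<in> leaves u v t \<Longrightarrow> dyadic_interval a b \<Longrightarrow> u \<le> a \<Longrightarrow> b \<le> v \<Longrightarrow>
   a \<le> c \<Longrightarrow> d \<le> b \<Longrightarrow> (a, b) \<noteq> (c, d) \<Longrightarrow> (a, b) \<in> carets u v t"
proof (induction t arbitrary: u v)
  case (Node l r)
  let ?m = "(u + v) / 2"
  have m: "u < ?m" "?m < v" using dyadic_interval_less[OF Node.prems(1)] by auto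
  have cd: "c < d" using leaves_bounds[OF Node.prems(2)] m by auto
  show ?case
  proof (cases "(a, b) = (u, v)")
    case False
    from dyadic_interval_sub_half[OF Node.prems(1,3,4,5) False] show ?thesis
    proof
      assume bm: "b \<le> ?m"
      then have "(c, d) \<in> leaves u ?m l"
        using Node.prems(2,7) leaves_bounds[of c d ?m v r] m cd by auto
      from Node.IH(1)[OF dyadic_interval_halves(1)[OF Node.prems(1)] this Node.prems(3,4) bm
          Node.prems(6,7,8)]
      show ?thesis by simp
    next
      assume am: "?m \<le> a"
      then have "(c, d) \<in> leaves ?m v r"
        using Node.prems(2,6) leaves_bounds[of c d u ?m l] m cd by auto
      from Node.IH(2)[OF dyadic_interval_halves(2)[OF Node.prems(1)] this Node.prems(3) am
          Node.prems(5-8)]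
      show ?thesis by simp
    qed
  qed simp
qed auto

lemma elem_carets_of_halves:
  "dyadic_interval u v \<Longrightarrow> dyadic_interval x y \<Longrightarrow> u \<le> x \<Longrightarrow> y \<le> v \<Longrightarrow>
   (x, (x + y) / 2) \<in> leaves u v t \<Longrightarrow> ((x + y) / 2, y) \<in> leaves u v t \<Longrightarrow> (x, y) \<in> elem_carets u v t"
proof (induction t arbitrary: u v)
  case Leaf
  then show ?case using dyadic_interval_less[OF Leaf.prems(2)] by auto
next
  case (Node l r)
  let ?m = "(u + v) / 2"
  have m: "u < ?m" "?m < v" using dyadic_interval_less[OF Node.prems(1)] by auto
  have xy: "x < y" using dyadic_interval_less[OF Node.prems(2)] .
  show ?case
  proof (cases "(x, y) = (u, v)")
    case True
    then have "(u, ?m) \<in> leaves u ?m l" "(?m, v) \<in> leaves ?m v r"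
      using Node.prems(5,6) leaves_bounds[of u ?m ?m v r] leaves_bounds[of ?m v u ?m l] m by auto
    then have "l = Leaf" "r = Leaf" using root_in_leaves_iff m by blast+
    then show ?thesis using True by simp
  next
    case False
    from dyadic_interval_sub_half[OF Node.prems(1-4) False] show ?thesis
    proof
      assume ym: "y \<le> ?m"
      then have "(x, (x + y) / 2) \<in> leaves u ?m l" "((x + y) / 2, y) \<in> leaves u ?m l"
        using Node.prems(5,6) leaves_bounds[of x "(x + y) / 2" ?m v r]
          leaves_bounds[of "(x + y) / 2" y ?m v r] m xy by auto
      from Node.IH(1)[OF dyadic_interval_halves(1)[OF Node.prems(1)] Node.prems(2,3) ym this]
      show ?thesis by simp
    next
      assume mx: "?m \<le> x"
      then have "(x, (x + y) / 2) \<in> leaves ?m v r" "((x + y) / 2, y) \<in> leaves ?m v r"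
        using Node.prems(5,6) leaves_bounds[of x "(x + y) / 2" u ?m l]
          leaves_bounds[of "(x + y) / 2" y u ?m l] m xy by auto
      from Node.IH(2)[OF dyadic_interval_halves(2)[OF Node.prems(1)] Node.prems(2) mx
          Node.prems(4) this]
      show ?thesis by simp
    qed
  qed
qed

section \<open>Geometry of forests\<close>

lemma mem_fleaves_iff: "(c, d) \<in> fleaves F \<longleftrightarrow> (\<exists>i. (c, d) \<in> leaves (of_int i) (of_int i + 1) (F i))"
  unfolding fleaves_def by auto

lemma mem_fcarets_iff: "(c, d) \<in> fcarets F \<longleftrightarrow> (\<exists>i. (c, d) \<in> carets (of_int i) (of_int i + 1) (F i))"
  unfolding fcarets_def by auto

lemma mem_felem_carets_iff:
  "(c, d) \<in> felem_carets F \<longleftrightarrow> (\<exists>i. (c, d) \<in> elem_carets (of_int i) (of_int i + 1) (F i))"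
  unfolding felem_carets_def by auto

lemma mem_fleaves_floor_iff:
  "(c, d) \<in> fleaves F \<longleftrightarrow> (c, d) \<in> leaves (of_int \<lfloor>c\<rfloor>) (of_int \<lfloor>c\<rfloor> + 1) (F \<lfloor>c\<rfloor>)"
proof
  assume "(c, d) \<in> fleaves F"
  then obtain i where i: "(c, d) \<in> leaves (of_int i) (of_int i + 1) (F i)"
    using mem_fleaves_iff by blast
  then have "\<lfloor>c\<rfloor> = i" using leaves_bounds[OF i] by (intro floor_unique) auto
  then show "(c, d) \<in> leaves (of_int \<lfloor>c\<rfloor>) (of_int \<lfloor>c\<rfloor> + 1) (F \<lfloor>c\<rfloor>)" using i by simp
qed (auto simp: mem_fleaves_iff)

lemma mem_fcarets_floor_iff:
  "(c, d) \<in> fcarets F \<longleftrightarrow> (c, d) \<in> carets (of_int \<lfloor>c\<rfloor>) (of_int \<lfloor>c\<rfloor> + 1) (F \<lfloor>c\<rfloor>)"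
proof
  assume "(c, d) \<in> fcarets F"
  then obtain i where i: "(c, d) \<in> carets (of_int i) (of_int i + 1) (F i)"
    using mem_fcarets_iff by blast
  then have "\<lfloor>c\<rfloor> = i" using carets_bounds[OF i] by (intro floor_unique) auto
  then show "(c, d) \<in> carets (of_int \<lfloor>c\<rfloor>) (of_int \<lfloor>c\<rfloor> + 1) (F \<lfloor>c\<rfloor>)" using i by simp
qed (auto simp: mem_fcarets_iff)

lemma fleaves_less: "(c, d) \<in> fleaves F \<Longrightarrow> c < d"
  unfolding mem_fleaves_iff using leaves_bounds by fastforce

lemma fleaves_cover: "\<exists>(c, d)\<in>fleaves F. c \<le> x \<and> x < d"
proof -
  have "of_int \<lfloor>x\<rfloor> \<le> x" "x < of_int \<lfloor>x\<rfloor> + 1" by linarith+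
  from leaves_cover[OF this] show ?thesis unfolding fleaves_def by blast
qed

lemma fleaves_floor: "(c, d) \<in> fleaves F \<Longrightarrow> c \<le> x \<Longrightarrow> x < d \<Longrightarrow> \<lfloor>x\<rfloor> = \<lfloor>c\<rfloor>"
  unfolding mem_fleaves_floor_iff
  by (drule leaves_bounds) (auto intro!: floor_unique simp: order.trans[OF of_int_floor_le])

lemma fleaves_unique:
  assumes "(c1, d1) \<in> fleaves F" "(c2, d2) \<in> fleaves F" "c1 \<le> x" "x < d1" "c2 \<le> x" "x < d2"
  shows "c1 = c2 \<and> d1 = d2"
proof -
  have "(c1, d1) \<in> leaves (of_int \<lfloor>x\<rfloor>) (of_int \<lfloor>x\<rfloor> + 1) (F \<lfloor>x\<rfloor>)"
    "(c2, d2) \<in> leaves (of_int \<lfloor>x\<rfloor>) (of_int \<lfloor>x\<rfloor> + 1) (F \<lfloor>x\<rfloor>)"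
    using assms fleaves_floor mem_fleaves_floor_iff by metis+
  from leaves_unique[OF this _ assms(3-6)] show ?thesis by simp
qed

lemma fleaves_not_inside: "(a, b) \<in> fleaves F \<Longrightarrow> (c, d) \<in> fleaves F \<Longrightarrow> \<not> (a < c \<and> c < b)"
  using fleaves_unique[of a b F c d c] fleaves_less[of c d F] by auto

lemma integer_not_inside_fleaves: "(a, b) \<in> fleaves F \<Longrightarrow> \<not> (a < of_int z \<and> of_int z < b)"
proof
  assume "(a, b) \<in> fleaves F" and inside: "a < of_int z \<and> of_int z < b"
  then have "z = \<lfloor>a\<rfloor>" using fleaves_floor[of a b F "of_int z"] by simp
  then show False using inside by linarith
qed

lemma fleaves_dyadic: "(c, d) \<in> fleaves F \<Longrightarrow> dyadic_interval c d"
  unfolding mem_fleaves_iff using leaves_dyadic[OF dyadic_interval_unit] by blast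

lemma fcarets_dyadic: "(c, d) \<in> fcarets F \<Longrightarrow> dyadic_interval c d"
  unfolding mem_fcarets_iff using carets_dyadic[OF dyadic_interval_unit] by blast

lemma felem_carets_subset_fcarets: "felem_carets F \<subseteq> fcarets F"
  unfolding felem_carets_def fcarets_def using elem_carets_subset_carets by blast

lemma fleaves_inj: "fleaves F1 = fleaves F2 \<Longrightarrow> F1 = F2"
proof
  fix j
  assume eq: "fleaves F1 = fleaves F2"
  have tree: "leaves (of_int j) (of_int j + 1) (F j) = {(c, d) \<in> fleaves F. \<lfloor>c\<rfloor> = j}" for F
  proof (intro set_eqI iffI)
    fix p assume p: "p \<in> leaves (of_int j) (of_int j + 1) (F j)"
    then have "\<lfloor>fst p\<rfloor> = j"
      using leaves_bounds[of "fst p" "snd p" "of_int j" "of_int j + 1" "F j"]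
      by (intro floor_unique) auto
    then show "p \<in> {(c, d) \<in> fleaves F. \<lfloor>c\<rfloor> = j}" using p unfolding fleaves_def by auto
  next
    fix p assume "p \<in> {(c, d) \<in> fleaves F. \<lfloor>c\<rfloor> = j}"
    then show "p \<in> leaves (of_int j) (of_int j + 1) (F j)"
      using mem_fleaves_floor_iff[of "fst p" "snd p" F] by (simp add: case_prod_beta)
  qed
  show "F1 j = F2 j"
    by (rule leaves_inj[of "of_int j" "of_int j + 1"]) (simp_all only: tree eq less_add_one)
qed

lemma felem_carets_halves:
  "(x, y) \<in> felem_carets F \<Longrightarrow> (x, (x + y) / 2) \<in> fleaves F \<and> ((x + y) / 2, y) \<in> fleaves F"
  unfolding mem_felem_carets_iff mem_fleaves_iff using elem_carets_halves_in_leaves by blast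

lemma felem_carets_of_halves:
  assumes "dyadic_interval x y" "(x, (x + y) / 2) \<in> fleaves F" "((x + y) / 2, y) \<in> fleaves F"
  shows "(x, y) \<in> felem_carets F"
proof -
  let ?j = "\<lfloor>x\<rfloor>"
  have u: "of_int ?j \<le> x" "y \<le> of_int ?j + 1" using dyadic_interval_within_unit[OF assms(1)] by auto
  have "x \<le> (x + y) / 2" "(x + y) / 2 < y" using dyadic_interval_less[OF assms(1)] by auto
  then have "\<lfloor>(x + y) / 2\<rfloor> = ?j" using u by (intro floor_unique) linarith+
  then have "(x, (x + y) / 2) \<in> leaves (of_int ?j) (of_int ?j + 1) (F ?j)"
    "((x + y) / 2, y) \<in> leaves (of_int ?j) (of_int ?j + 1) (F ?j)"
    using assms(2,3) mem_fleaves_floor_iff by metis+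
  from elem_carets_of_halves[OF dyadic_interval_unit assms(1) u this]
  show ?thesis unfolding mem_felem_carets_iff by blast
qed

lemma elem_caret_below_fcaret: "(c, d) \<in> fcarets F \<Longrightarrow> \<exists>(e1, e2)\<in>felem_carets F. c \<le> e1 \<and> e2 \<le> d"
proof -
  assume "(c, d) \<in> fcarets F"
  then obtain i where "(c, d) \<in> carets (of_int i) (of_int i + 1) (F i)"
    using mem_fcarets_iff by blast
  from elem_caret_below_caret[OF this less_add_one] obtain e1 e2
    where "(e1, e2) \<in> elem_carets (of_int i) (of_int i + 1) (F i)" "c \<le> e1" "e2 \<le> d" by blast
  moreover from this(1) have "(e1, e2) \<in> felem_carets F" using mem_felem_carets_iff by blast
  ultimately show ?thesis by auto
qed

lemma dyadic_interval_above_fleaf_in_fcarets: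
  assumes "(c, d) \<in> fleaves F" "dyadic_interval a b" "a \<le> c" "d \<le> b" "(a, b) \<noteq> (c, d)"
  shows "(a, b) \<in> fcarets F"
proof -
  let ?j = "\<lfloor>a\<rfloor>"
  have u: "of_int ?j \<le> a" "b \<le> of_int ?j + 1" using dyadic_interval_within_unit[OF assms(2)] by auto
  have "\<lfloor>c\<rfloor> = ?j" using u assms(3,4) fleaves_less[OF assms(1)] by (intro floor_unique) linarith+
  then have "(c, d) \<in> leaves (of_int ?j) (of_int ?j + 1) (F ?j)"
    using assms(1) mem_fleaves_floor_iff by metis
  from dyadic_interval_above_leaf_in_carets[OF dyadic_interval_unit this assms(2) u assms(3-5)]
  show ?thesis unfolding mem_fcarets_iff by blast
qed

lemma finite_fleaves_between: "finite {(a, b) \<in> fleaves F. u \<le> a \<and> a \<le> v}"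
proof (rule finite_subset)
  show "{(a, b) \<in> fleaves F. u \<le> a \<and> a \<le> v}
    \<subseteq> (\<Union>i\<in>{\<lfloor>u\<rfloor>..\<lfloor>v\<rfloor>}. leaves (of_int i) (of_int i + 1) (F i))"
  proof clarify
    fix a b assume "(a, b) \<in> fleaves F" "u \<le> a" "a \<le> v"
    then have "(a, b) \<in> leaves (of_int \<lfloor>a\<rfloor>) (of_int \<lfloor>a\<rfloor> + 1) (F \<lfloor>a\<rfloor>)" "\<lfloor>a\<rfloor> \<in> {\<lfloor>u\<rfloor>..\<lfloor>v\<rfloor>}"
      using mem_fleaves_floor_iff floor_mono by auto
    then show "(a, b) \<in> (\<Union>i\<in>{\<lfloor>u\<rfloor>..\<lfloor>v\<rfloor>}. leaves (of_int i) (of_int i + 1) (F i))" by blast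
  qed
qed (simp add: finite_leaves)

lemma finite_spaces_between: "finite {p \<in> spaces F. u < p \<and> p < v}"
proof (rule finite_subset)
  show "{p \<in> spaces F. u < p \<and> p < v} \<subseteq> fst ` {(a, b) \<in> fleaves F. u \<le> a \<and> a \<le> v}"
    unfolding spaces_def
  proof clarify
    fix a b assume "(a, b) \<in> fleaves F" "u < a" "a < v"
    then show "a \<in> fst ` {(a, b) \<in> fleaves F. u \<le> a \<and> a \<le> v}"
      by (intro image_eqI[of _ _ "(a, b)"]) auto
  qed
qed (simp add: finite_fleaves_between)

lemma finite_fleaves_within: "finite {(a, b) \<in> fleaves F. u \<le> a \<and> b \<le> v}"
proof (rule finite_subset[OF _ finite_fleaves_between[of F u v]])
  show "{(a, b) \<in> fleaves F. u \<le> a \<and> b \<le> v} \<subseteq> {(a, b) \<in> fleaves F. u \<le> a \<and> a \<le> v}"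
    using fleaves_less by fastforce
qed

section \<open>Reduced forest diagrams are unique\<close>

definition affine_on :: "(real \<Rightarrow> real) \<Rightarrow> real \<Rightarrow> real \<Rightarrow> bool" where
  "affine_on f a b \<longleftrightarrow> (\<exists>s c. \<forall>t\<in>{a..b}. f t = s * t + c)"

text \<open>The intervals [a,b] that can occur as leaves of a forest diagram for f.\<close>
definition dyadic_linear :: "(real \<Rightarrow> real) \<Rightarrow> real \<Rightarrow> real \<Rightarrow> bool" where
  "dyadic_linear f a b \<longleftrightarrow> dyadic_interval a b \<and> dyadic_interval (f a) (f b) \<and> affine_on f a b"

definition maximal_dyadic_linear :: "(real \<Rightarrow> real) \<Rightarrow> (real \<times> real) set" where
  "maximal_dyadic_linear f = {(a, b). dyadic_linear f a b \<and>
     (\<forall>c d. dyadic_linear f c d \<and> c \<le> a \<and> b \<le> d \<longrightarrow> c = a \<and> d = b)}"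

lemma strict_mono_surj_inv:
  fixes f :: "real \<Rightarrow> real"
  assumes "strict_mono f" "surj f"
  shows "strict_mono (inv f)" "surj (inv f)" "inv (inv f) = f"
proof -
  have inj: "inj f" using assms(1) strict_mono_imp_inj_on by blast
  then have bij: "bij f" using assms(2) bij_def by blast
  show "strict_mono (inv f)" by (rule strict_mono_inv[OF assms]) (rule inv_f_f[OF inj])
  show "surj (inv f)" using bij bij_betw_inv_into bij_is_surj by blast
  show "inv (inv f) = f" by (rule inv_inv_eq[OF bij])
qed

lemma affine_slope:
  fixes f :: "real \<Rightarrow> real"
  shows "\<forall>t\<in>{a..b}. f t = s * t + c \<Longrightarrow> x \<in> {a..b} \<Longrightarrow> y \<in> {a..b} \<Longrightarrow> f y - f x = s * (y - x)"
  by (simp add: algebra_simps)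

lemma affine_on_subinterval: "affine_on f a b \<Longrightarrow> a \<le> c \<Longrightarrow> d \<le> b \<Longrightarrow> affine_on f c d"
  unfolding affine_on_def by (meson atLeastAtMost_iff order_trans)

lemma affine_on_midpoint:
  "affine_on f a b \<Longrightarrow> a \<le> x \<Longrightarrow> x \<le> y \<Longrightarrow> y \<le> b \<Longrightarrow> f ((x + y) / 2) = (f x + f y) / 2"
  unfolding affine_on_def by (auto simp: field_simps)

lemma affine_on_join:
  assumes "affine_on f a ((a + b) / 2)" "affine_on f ((a + b) / 2) b" "a < b"
    and "f ((a + b) / 2) = (f a + f b) / 2"
  shows "affine_on f a b"
proof -
  let ?m = "(a + b) / 2"
  obtain s1 c1 where 1: "\<forall>t\<in>{a..?m}. f t = s1 * t + c1" using assms(1) affine_on_def by blast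
  obtain s2 c2 where 2: "\<forall>t\<in>{?m..b}. f t = s2 * t + c2" using assms(2) affine_on_def by blast
  have m: "a < ?m" "?m < b" using assms(3) by auto
  have "s1 * (?m - a) = s2 * (b - ?m)"
    using affine_slope[OF 1, of a ?m] affine_slope[OF 2, of ?m b] assms(4) m
    by (simp add: field_simps)
  moreover have "b - ?m = ?m - a" by (simp add: field_simps)
  ultimately have s: "s1 = s2" using m by simp
  moreover have "f ?m = s1 * ?m + c1" using 1 m by simp
  moreover have "f ?m = s2 * ?m + c2" using 2 m by simp
  ultimately have "c1 = c2" by simp
  then have "\<forall>t\<in>{a..b}. f t = s1 * t + c1" using 1 2 s by (metis atLeastAtMost_iff linear)
  then show ?thesis unfolding affine_on_def by blast
qed

lemma dyadic_linear_less: "dyadic_linear f a b \<Longrightarrow> a < b \<and> f a < f b"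
  unfolding dyadic_linear_def using dyadic_interval_less by blast

text \<open>The slope is a quotient of powers of 2.\<close>
lemma dyadic_linear_image_subinterval:
  assumes "dyadic_linear f a b" "dyadic_interval c d" "a \<le> c" "d \<le> b"
  shows "dyadic_interval (f c) (f d)"
proof -
  obtain n where n: "b - a = 1 / 2 ^ n" "a * 2 ^ n \<in> \<int>"
    using assms(1) dyadic_interval_iff dyadic_linear_def by blast
  obtain M where M: "f b - f a = 1 / 2 ^ M" "f a * 2 ^ M \<in> \<int>"
    using assms(1) dyadic_interval_iff dyadic_linear_def by blast
  obtain n' where n': "d - c = 1 / 2 ^ n'" "c * 2 ^ n' \<in> \<int>"
    using assms(2) dyadic_interval_iff by blast
  obtain s c0 where sc: "\<forall>t\<in>{a..b}. f t = s * t + c0"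
    using assms(1) affine_on_def dyadic_linear_def by blast
  have cd: "c < d" using dyadic_interval_less[OF assms(2)] .
  have s: "s = 2 ^ n / 2 ^ M"
    using affine_slope[OF sc, of a b] dyadic_interval_less[of a b] n(1) M(1) assms(3,4) cd
    by (simp add: field_simps)
  have "(1::real) / 2 ^ n' \<le> 1 / 2 ^ n" using n(1) n'(1) assms(3,4) by linarith
  then have "n \<le> n'" by (simp add: field_simps)
  then obtain e where e: "n' = n + e" using le_Suc_ex by blast
  have "f d - f c = 1 / 2 ^ (M + e)"
    using affine_slope[OF sc, of c d] assms(3,4) cd unfolding s n'(1) e by (simp add: power_add)
  moreover have "f c * 2 ^ (M + e) = (f a * 2 ^ M) * 2 ^ e + c * 2 ^ n' - (a * 2 ^ n) * 2 ^ e"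
  proof -
    have fc: "f c * 2 ^ M = f a * 2 ^ M + c * 2 ^ n - a * 2 ^ n"
      using affine_slope[OF sc, of a c] assms(3,4) cd unfolding s by (simp add: field_simps)
    show ?thesis unfolding e power_add
      by (simp only: mult.assoc[symmetric] fc) (simp add: algebra_simps)
  qed
  moreover have "(f a * 2 ^ M) * 2 ^ e + c * 2 ^ n' - (a * 2 ^ n) * 2 ^ e \<in> \<int>"
    using Ints_mult[OF M(2), of "2 ^ e"] Ints_mult[OF n(2), of "2 ^ e"] n'(2)
    by (intro Ints_diff Ints_add) simp_all
  ultimately show ?thesis using dyadic_interval_iff by auto
qed

lemma dyadic_linear_subinterval:
  "dyadic_linear f a b \<Longrightarrow> dyadic_interval c d \<Longrightarrow> a \<le> c \<Longrightarrow> d \<le> b \<Longrightarrow> dyadic_linear f c d"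
  unfolding dyadic_linear_def
  using dyadic_linear_image_subinterval affine_on_subinterval dyadic_linear_def by blast

lemma dyadic_linear_inv:
  assumes "strict_mono f" "surj f" "dyadic_linear f a b"
  shows "dyadic_linear (inv f) (f a) (f b)"
proof -
  have inv_f: "inv f (f x) = x" for x using inv_f_f[OF strict_mono_imp_inj_on[OF assms(1)]] .
  have f_inv: "f (inv f y) = y" for y using surj_f_inv_f[OF assms(2)] .
  obtain s c where sc: "\<forall>t\<in>{a..b}. f t = s * t + c"
    using assms(3) unfolding dyadic_linear_def affine_on_def by blast
  have lt: "a < b" "f a < f b" using dyadic_linear_less[OF assms(3)] by auto
  moreover have "f b - f a = s * (b - a)" using affine_slope[OF sc, of a b] lt by simp
  ultimately have "s > 0" by (metis diff_gt_0_iff_gt zero_less_mult_pos2)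
  have "inv f y = (1 / s) * y + (- c / s)" if "y \<in> {f a..f b}" for y
  proof -
    have "a \<le> inv f y" "inv f y \<le> b"
      using that strict_mono_less_eq[OF assms(1), of a "inv f y"]
        strict_mono_less_eq[OF assms(1), of "inv f y" b] f_inv by simp_all
    then have "f (inv f y) = s * inv f y + c" using sc by simp
    then have "y = s * inv f y + c" by (simp only: f_inv)
    then show ?thesis using \<open>s > 0\<close> by (simp add: field_simps)
  qed
  then have "affine_on (inv f) (f a) (f b)" unfolding affine_on_def by blast
  then show ?thesis using assms(3) unfolding dyadic_linear_def inv_f by simp
qed

lemma fleaves_eq_maximal_dyadic_linear:
  assumes leaves: "\<And>c d. (c, d) \<in> fleaves F \<Longrightarrow> dyadic_linear f c d"
    and maximal: "\<And>a b c d. (c, d) \<in> fleaves F \<Longrightarrow> dyadic_linear f a b \<Longrightarrow> a \<le> c \<Longrightarrow> d \<le> b \<Longrightarrow>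
      a = c \<and> b = d"
  shows "fleaves F = maximal_dyadic_linear f"
proof (intro set_eqI iffI)
  fix p assume "p \<in> fleaves F"
  moreover obtain c d where p: "p = (c, d)" by fastforce
  ultimately have "dyadic_linear f c d"
    "\<forall>a b. dyadic_linear f a b \<and> a \<le> c \<and> d \<le> b \<longrightarrow> a = c \<and> b = d"
    using leaves maximal by blast+
  then show "p \<in> maximal_dyadic_linear f" unfolding maximal_dyadic_linear_def p by simp
next
  fix p assume "p \<in> maximal_dyadic_linear f"
  then obtain a b where p: "p = (a, b)" and ab: "dyadic_linear f a b"
    and max_ab: "\<And>c d. dyadic_linear f c d \<Longrightarrow> c \<le> a \<Longrightarrow> b \<le> d \<Longrightarrow> c = a \<and> d = b"
    unfolding maximal_dyadic_linear_def by auto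
  obtain c d where cd: "(c, d) \<in> fleaves F" "c \<le> a" "a < d" using fleaves_cover[of F a] by blast
  have "c < b" using cd(2) dyadic_linear_less[OF ab] by simp
  then consider "a \<le> c" "d \<le> b" | "c \<le> a" "b \<le> d"
    using dyadic_interval_nested[OF fleaves_dyadic[OF cd(1)], of a b] ab cd(3)
    unfolding dyadic_linear_def by blast
  then have "a = c \<and> b = d"
  proof cases
    case 1
    from maximal[OF cd(1) ab this] show ?thesis .
  next
    case 2
    from max_ab[OF leaves[OF cd(1)] this] show ?thesis by simp
  qed
  then show "p \<in> fleaves F" using cd(1) p by simp
qed

lemma forest_diagram_leaves_dyadic_linear:
  "forest_diagram f B T \<Longrightarrow> (c, d) \<in> fleaves B \<Longrightarrow> dyadic_linear f c d"
  unfolding forest_diagram_def dyadic_linear_def affine_on_def using fleaves_dyadic by blast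

text \<open>A leaf strictly inside a dyadic-linear interval lies below a caret inside it, hence below
  an elementary caret on which f is linear; its image would be an opposing top caret.\<close>
lemma reduced_bottom_leaves:
  assumes diagram: "forest_diagram f B T" and red: "reduced f B T"
  shows "fleaves B = maximal_dyadic_linear f"
proof (rule fleaves_eq_maximal_dyadic_linear)
  show "dyadic_linear f c d" if "(c, d) \<in> fleaves B" for c d
    using forest_diagram_leaves_dyadic_linear[OF diagram that] .
next
  fix a b c d
  assume cd: "(c, d) \<in> fleaves B" and ab: "dyadic_linear f a b" "a \<le> c" "d \<le> b"
  show "a = c \<and> b = d"
  proof (rule ccontr)
    assume ne: "\<not> (a = c \<and> b = d)"
    have "(a, b) \<in> fcarets B"
      using dyadic_interval_above_fleaf_in_fcarets[OF cd _ ab(2,3)] ab(1) ne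
      unfolding dyadic_linear_def by auto
    from elem_caret_below_fcaret[OF this] obtain e1 e2
      where e: "(e1, e2) \<in> felem_carets B" "a \<le> e1" "e2 \<le> b" by blast
    let ?m = "(e1 + e2) / 2"
    have e12: "dyadic_interval e1 e2"
      using e(1) felem_carets_subset_fcarets fcarets_dyadic by blast
    have "(e1, ?m) \<in> fleaves B" "(?m, e2) \<in> fleaves B" using felem_carets_halves[OF e(1)] by auto
    then have "(f e1, f ?m) \<in> fleaves T" "(f ?m, f e2) \<in> fleaves T"
      using diagram unfolding forest_diagram_def by auto
    moreover have "f ?m = (f e1 + f e2) / 2"
      using affine_on_midpoint[of f a b e1 e2] ab(1) e(2,3) dyadic_interval_less[OF e12]
      unfolding dyadic_linear_def by simp
    moreover have "dyadic_interval (f e1) (f e2)"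
      using dyadic_linear_image_subinterval[OF ab(1) e12 e(2,3)] .
    ultimately have "(f e1, f e2) \<in> felem_carets T" using felem_carets_of_halves by simp
    then show False using red e(1) unfolding reduced_def by blast
  qed
qed

lemma forest_diagram_top_leaves:
  assumes "strict_mono f" "surj f" and diagram: "forest_diagram f B T"
  shows "fleaves T = (\<lambda>(a, b). (f a, f b)) ` fleaves B"
proof
  show "(\<lambda>(a, b). (f a, f b)) ` fleaves B \<subseteq> fleaves T"
    using diagram unfolding forest_diagram_def by auto
  show "fleaves T \<subseteq> (\<lambda>(a, b). (f a, f b)) ` fleaves B"
  proof
    fix p assume "p \<in> fleaves T"
    moreover obtain c d where p: "p = (c, d)" by fastforce
    ultimately have cd: "(c, d) \<in> fleaves T" by simp
    have f_inv: "f (inv f c) = c" using surj_f_inv_f[OF assms(2)] .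
    obtain a b where ab: "(a, b) \<in> fleaves B" "a \<le> inv f c" "inv f c < b"
      using fleaves_cover[of B "inv f c"] by blast
    have "(f a, f b) \<in> fleaves T" using diagram ab(1) unfolding forest_diagram_def by auto
    moreover have "f a \<le> c"
      using strict_mono_less_eq[OF assms(1), of a "inv f c"] ab(2) f_inv by simp
    moreover have "c < f b" using strict_mono_less[OF assms(1), of "inv f c" b] ab(3) f_inv by simp
    ultimately have "f a = c \<and> f b = d"
      using fleaves_unique[OF _ cd, of "f a" "f b" c] fleaves_less[OF cd] by simp
    then show "p \<in> (\<lambda>(a, b). (f a, f b)) ` fleaves B" using ab(1) p by (auto intro: image_eqI)
  qed
qed

lemma reduced_forest_diagram_unique:
  assumes "strict_mono f" "surj f"
    and "forest_diagram f B1 T1" "reduced f B1 T1" "forest_diagram f B2 T2" "reduced f B2 T2"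
  shows "B1 = B2 \<and> T1 = T2"
  using reduced_bottom_leaves[OF assms(3,4)] reduced_bottom_leaves[OF assms(5,6)]
    forest_diagram_top_leaves[OF assms(1,2,3)] forest_diagram_top_leaves[OF assms(1,2,5)]
  by (metis fleaves_inj)

lemma maximal_dyadic_linear_inv:
  assumes "strict_mono f" "surj f" "(a, b) \<in> maximal_dyadic_linear f"
  shows "(f a, f b) \<in> maximal_dyadic_linear (inv f)"
proof -
  note inv = strict_mono_surj_inv[OF assms(1,2)]
  have inv_f: "inv f (f x) = x" for x using inv_f_f[OF strict_mono_imp_inj_on[OF assms(1)]] .
  have f_inv: "f (inv f y) = y" for y using surj_f_inv_f[OF assms(2)] .
  have ab: "dyadic_linear f a b"
    and max_ab: "\<And>c d. dyadic_linear f c d \<Longrightarrow> c \<le> a \<Longrightarrow> b \<le> d \<Longrightarrow> c = a \<and> d = b"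
    using assms(3) unfolding maximal_dyadic_linear_def by auto
  have "c = f a \<and> d = f b" if cd: "dyadic_linear (inv f) c d" "c \<le> f a" "f b \<le> d" for c d
  proof -
    have "dyadic_linear f (inv f c) (inv f d)"
      using dyadic_linear_inv[OF inv(1,2) cd(1)] unfolding inv(3) .
    moreover have "inv f c \<le> a" "b \<le> inv f d"
      using cd(2,3) strict_mono_less_eq[OF inv(1)] inv_f by metis+
    ultimately have "inv f c = a \<and> inv f d = b" using max_ab by blast
    then show ?thesis using f_inv by metis
  qed
  then show ?thesis
    using dyadic_linear_inv[OF assms(1,2) ab] unfolding maximal_dyadic_linear_def by blast
qed

section \<open>Existence of reduced forest diagrams\<close>

fun greedy_tree :: "(real \<Rightarrow> real) \<Rightarrow> nat \<Rightarrow> real \<Rightarrow> real \<Rightarrow> tree" where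
  "greedy_tree f 0 a b = Leaf"
| "greedy_tree f (Suc n) a b = (if dyadic_linear f a b then Leaf
     else Node (greedy_tree f n a ((a + b) / 2)) (greedy_tree f n ((a + b) / 2) b))"

definition greedy_forest :: "(real \<Rightarrow> real) \<Rightarrow> nat \<Rightarrow> forest" where
  "greedy_forest f n = (\<lambda>i. greedy_tree f n (of_int i) (of_int i + 1))"

definition linear_at_level :: "(real \<Rightarrow> real) \<Rightarrow> nat \<Rightarrow> bool" where
  "linear_at_level f n \<longleftrightarrow> (\<forall>k::int. dyadic_linear f (of_int k / 2 ^ n) ((of_int k + 1) / 2 ^ n))"

definition linear_near_infinity :: "(real \<Rightarrow> real) \<Rightarrow> bool" where
  "linear_near_infinity f \<longleftrightarrow> finite {i::int. \<not> dyadic_linear f (of_int i) (of_int i + 1)}"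

lemma linear_at_level_dyadic_linear:
  assumes "linear_at_level f n" "dyadic_interval c d" "d - c \<le> 1 / 2 ^ n"
  shows "dyadic_linear f c d"
proof -
  let ?k = "\<lfloor>c * 2 ^ n\<rfloor>"
  let ?a = "of_int ?k / 2 ^ n :: real" and ?b = "(of_int ?k + 1) / 2 ^ n :: real"
  have ab: "dyadic_linear f ?a ?b" using assms(1) unfolding linear_at_level_def by blast
  have "?a \<le> c" "c < ?b" by (simp_all add: field_simps) linarith+
  moreover have "?b - ?a = 1 / 2 ^ n" by (simp add: field_simps)
  moreover have "c < d" using dyadic_interval_less[OF assms(2)] .
  ultimately have "?a \<le> c \<and> d \<le> ?b"
    using dyadic_interval_nested[OF assms(2), of ?a ?b] ab assms(3) unfolding dyadic_linear_def
    by fastforce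
  then show ?thesis using dyadic_linear_subinterval[OF ab assms(2)] by blast
qed

lemma greedy_tree_carets: "(c, d) \<in> carets a b (greedy_tree f n a b) \<Longrightarrow> \<not> dyadic_linear f c d"
proof (induction n arbitrary: a b)
  case (Suc n)
  then show ?case by (auto split: if_splits)
qed simp

lemma greedy_tree_leaves:
  "(c, d) \<in> leaves a b (greedy_tree f n a b) \<Longrightarrow> dyadic_linear f c d \<or> d - c = (b - a) / 2 ^ n"
proof (induction n arbitrary: a b)
  case (Suc n)
  show ?case
  proof (cases "dyadic_linear f a b")
    case False
    then have "(c, d) \<in> leaves a ((a + b) / 2) (greedy_tree f n a ((a + b) / 2)) \<or>
        (c, d) \<in> leaves ((a + b) / 2) b (greedy_tree f n ((a + b) / 2) b)"
      using Suc.prems by simp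
    moreover have "((a + b) / 2 - a) / 2 ^ n = (b - a) / 2 ^ Suc n"
      "(b - (a + b) / 2) / 2 ^ n = (b - a) / 2 ^ Suc n" by (simp_all add: field_simps)
    ultimately show ?thesis using Suc.IH by metis
  qed (use Suc.prems in simp)
qed simp

lemma greedy_forest_leaves:
  "linear_at_level f n \<Longrightarrow> (c, d) \<in> fleaves (greedy_forest f n) \<Longrightarrow> dyadic_linear f c d"
  unfolding mem_fleaves_iff greedy_forest_def
  using greedy_tree_leaves linear_at_level_dyadic_linear leaves_dyadic[OF dyadic_interval_unit]
  by fastforce

lemma greedy_forest_fcarets: "(c, d) \<in> fcarets (greedy_forest f n) \<Longrightarrow> \<not> dyadic_linear f c d"
  unfolding mem_fcarets_iff greedy_forest_def using greedy_tree_carets by blast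

lemma greedy_forest_leaves_maximal:
  assumes "linear_at_level f n"
  shows "fleaves (greedy_forest f n) = maximal_dyadic_linear f"
proof (rule fleaves_eq_maximal_dyadic_linear)
  fix a b c d
  assume cd: "(c, d) \<in> fleaves (greedy_forest f n)" and ab: "dyadic_linear f a b" "a \<le> c" "d \<le> b"
  then show "a = c \<and> b = d"
    using dyadic_interval_above_fleaf_in_fcarets[OF cd] greedy_forest_fcarets
    unfolding dyadic_linear_def by blast
qed (rule greedy_forest_leaves[OF assms])

lemma greedy_tree_Leaf: "dyadic_linear f a b \<Longrightarrow> greedy_tree f n a b = Leaf"
  by (cases n) simp_all

lemma greedy_forest_is_forest: "linear_near_infinity f \<Longrightarrow> is_forest (greedy_forest f n)"
  unfolding is_forest_def linear_near_infinity_def greedy_forest_def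
  by (rule finite_subset[rotated]) (auto intro: greedy_tree_Leaf)

text \<open>The greedy forests subdivide only where f is not dyadic-linear, while an opposing pair of
  carets would make f dyadic-linear on the bottom one.\<close>
lemma reduced_forest_diagram_exists:
  assumes "strict_mono f" "surj f"
    and level: "linear_at_level f n" "linear_at_level (inv f) m"
    and ends: "linear_near_infinity f" "linear_near_infinity (inv f)"
  shows "forest_diagram f (greedy_forest f n) (greedy_forest (inv f) m)
    \<and> reduced f (greedy_forest f n) (greedy_forest (inv f) m)"
proof
  let ?B = "greedy_forest f n" and ?T = "greedy_forest (inv f) m"
  have top: "(f a, f b) \<in> fleaves ?T" if "(a, b) \<in> fleaves ?B" for a b
    using that maximal_dyadic_linear_inv[OF assms(1,2)]
    unfolding greedy_forest_leaves_maximal[OF level(1)] greedy_forest_leaves_maximal[OF level(2)]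
    by blast
  show diagram: "forest_diagram f ?B ?T"
    unfolding forest_diagram_def
    using greedy_forest_is_forest[OF ends(1)] greedy_forest_is_forest[OF ends(2)] top
      greedy_forest_leaves[OF level(1)] unfolding dyadic_linear_def affine_on_def by blast
  show "reduced f ?B ?T"
    unfolding reduced_def
  proof clarify
    fix e1 e2 assume e: "(e1, e2) \<in> felem_carets ?B" "(f e1, f e2) \<in> felem_carets ?T"
    let ?m = "(e1 + e2) / 2"
    have halves: "(e1, ?m) \<in> fleaves ?B" "(?m, e2) \<in> fleaves ?B"
      using felem_carets_halves[OF e(1)] by auto
    have e12: "dyadic_interval e1 e2" "dyadic_interval (f e1) (f e2)"
      using e felem_carets_subset_fcarets fcarets_dyadic by blast+
    have "f e1 < f ?m" using dyadic_linear_less greedy_forest_leaves[OF level(1) halves(1)] by blast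
    moreover have "f e1 < (f e1 + f e2) / 2" using dyadic_interval_less[OF e12(2)] by simp
    ultimately have "f ?m = (f e1 + f e2) / 2"
      using fleaves_unique[OF top[OF halves(1)] conjunct1[OF felem_carets_halves[OF e(2)]]
          order.refl
          _ order.refl] by blast
    then have "affine_on f e1 e2"
      using affine_on_join[of f e1 e2] greedy_forest_leaves[OF level(1)] halves
        dyadic_interval_less[OF e12(1)] unfolding dyadic_linear_def by simp
    then have "dyadic_linear f e1 e2" using e12 unfolding dyadic_linear_def by simp
    then show False
      using greedy_forest_fcarets e(1) felem_carets_subset_fcarets by blast
  qed
qed

section \<open>Piecewise-linear dyadic homeomorphisms\<close>

text \<open>Like \<^const>\<open>thompsonF\<close>, but with closed linear pieces and without continuity, so that the
  class is visibly closed under inverses.\<close>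
definition dyadic_PL :: "(real \<Rightarrow> real) \<Rightarrow> bool" where
  "dyadic_PL f \<longleftrightarrow> strict_mono f \<and> surj f \<and>
     (\<exists>P. finite P \<and> (\<forall>x\<in>P. dyadic x \<and> dyadic (f x)) \<and>
        (\<forall>a b. a < b \<and> {a<..<b} \<inter> P = {} \<longrightarrow> (\<exists>k::int. \<exists>c. \<forall>t\<in>{a..b}. f t = 2 powi k * t + c))) \<and>
     (\<exists>m::int. \<exists>a. \<forall>t\<le>a. f t = t - of_int m) \<and> (\<exists>n::int. \<exists>b. \<forall>t\<ge>b. f t = t - of_int n)"

lemma continuous_affine_closed_interval:
  fixes f :: "real \<Rightarrow> real"
  assumes "continuous_on UNIV f" "a < b" "\<forall>t\<in>{a<..<b}. f t = s * t + c"
  shows "\<forall>t\<in>{a..b}. f t = s * t + c"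
proof
  fix t assume "t \<in> {a..b}"
  then have "t \<in> closure {a<..<b}" using assms(2) by simp
  moreover have "continuous_on (closure {a<..<b}) (\<lambda>t. f t - (s * t + c))"
    by (intro continuous_intros continuous_on_subset[OF assms(1)]) auto
  ultimately have "f t - (s * t + c) = 0"
    using continuous_constant_on_closure[of "{a<..<b}" "\<lambda>t. f t - (s * t + c)" 0] assms(3) by auto
  then show "f t = s * t + c" by simp
qed

lemma thompsonF_dyadic_PL:
  assumes "f \<in> thompsonF"
  shows "dyadic_PL f"
proof -
  have cont: "continuous_on UNIV f" using assms unfolding thompsonF_def by blast
  obtain P where P: "finite P" "\<forall>x\<in>P. dyadic x \<and> dyadic (f x)"
    "\<forall>a b. a < b \<and> {a<..<b} \<inter> P = {} \<longrightarrow> (\<exists>k::int. \<exists>c. \<forall>t\<in>{a<..<b}. f t = 2 powi k * t + c)"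
    using assms unfolding thompsonF_def by blast
  have "\<forall>a b. a < b \<and> {a<..<b} \<inter> P = {} \<longrightarrow> (\<exists>k::int. \<exists>c. \<forall>t\<in>{a..b}. f t = 2 powi k * t + c)"
    using P(3) continuous_affine_closed_interval[OF cont] by meson
  with P(1,2) assms show ?thesis unfolding thompsonF_def dyadic_PL_def by blast
qed

lemma affine_piece_inv:
  fixes f :: "real \<Rightarrow> real"
  assumes "strict_mono f" "surj f" "\<forall>t\<in>{inv f a..inv f b}. f t = 2 powi k * t + c" "y \<in> {a..b}"
  shows "inv f y = 2 powi (- k) * y + (- c * 2 powi (- k))"
proof -
  have f_inv: "f (inv f x) = x" for x using surj_f_inv_f[OF assms(2)] .
  have "inv f y \<in> {inv f a..inv f b}"
    using assms(4) strict_mono_less_eq[OF strict_mono_surj_inv(1)[OF assms(1,2)]] by simp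
  then have "y = 2 powi k * inv f y + c" using assms(3) f_inv by metis
  then show ?thesis by (simp add: field_simps power_int_minus)
qed

lemma dyadic_pieces_inv:
  fixes f :: "real \<Rightarrow> real"
  assumes "strict_mono f" "surj f"
    and pieces: "\<forall>a b. a < b \<and> {a<..<b} \<inter> P = {} \<longrightarrow> (\<exists>k::int. \<exists>c. \<forall>t\<in>{a..b}. f t = 2 powi k * t + c)"
    and "a < b" "{a<..<b} \<inter> f ` P = {}"
  shows "\<exists>k::int. \<exists>c. \<forall>t\<in>{a..b}. inv f t = 2 powi k * t + c"
proof -
  have "{inv f a<..<inv f b} \<inter> P = {}"
  proof (rule ccontr)
    assume "{inv f a<..<inv f b} \<inter> P \<noteq> {}"
    then obtain p where "p \<in> P" "inv f a < p" "p < inv f b" by auto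
    then have "f p \<in> {a<..<b} \<inter> f ` P"
      using strict_mono_less[OF assms(1), of "inv f a" p]
        strict_mono_less[OF assms(1), of p "inv f b"]
        surj_f_inv_f[OF assms(2)] by auto
    then show False using assms(5) by blast
  qed
  moreover have "inv f a < inv f b"
    using assms(4) strict_mono_surj_inv(1)[OF assms(1,2)] strict_monoD by blast
  ultimately obtain k c where "\<forall>t\<in>{inv f a..inv f b}. f t = 2 powi k * t + c"
    using pieces by blast
  then have "\<forall>t\<in>{a..b}. inv f t = 2 powi (- k) * t + (- c * 2 powi (- k))"
    using affine_piece_inv[OF assms(1,2)] by blast
  then show ?thesis by blast
qed

lemma translation_inv:
  fixes f :: "real \<Rightarrow> real"
  assumes "inj f" "f (t + m) = t"
  shows "inv f t = t + m"
  using assms inv_f_f by metis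

lemma dyadic_PL_inv:
  assumes "dyadic_PL f"
  shows "dyadic_PL (inv f)"
proof -
  have sm: "strict_mono f" and su: "surj f" using assms unfolding dyadic_PL_def by blast+
  have inj: "inj f" using strict_mono_imp_inj_on[OF sm] .
  obtain P where P: "finite P" "\<forall>x\<in>P. dyadic x \<and> dyadic (f x)"
    "\<forall>a b. a < b \<and> {a<..<b} \<inter> P = {} \<longrightarrow> (\<exists>k::int. \<exists>c. \<forall>t\<in>{a..b}. f t = 2 powi k * t + c)"
    using assms unfolding dyadic_PL_def by blast
  obtain m a0 n b0 where ends: "\<forall>t\<le>a0. f t = t - of_int m" "\<forall>t\<ge>b0. f t = t - of_int n"
    using assms unfolding dyadic_PL_def by blast
  have "inv f t = t - of_int (- m)" if "t \<le> a0 - of_int m" for t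
    using translation_inv[OF inj, of t "of_int m"] ends(1) that by simp
  moreover have "inv f t = t - of_int (- n)" if "t \<ge> b0 - of_int n" for t
    using translation_inv[OF inj, of t "of_int n"] ends(2) that by simp
  moreover have "\<exists>Q. finite Q \<and> (\<forall>x\<in>Q. dyadic x \<and> dyadic (inv f x)) \<and>
      (\<forall>a b. a < b \<and> {a<..<b} \<inter> Q = {} \<longrightarrow> (\<exists>k::int. \<exists>c. \<forall>t\<in>{a..b}. inv f t = 2 powi k * t + c))"
    using P dyadic_pieces_inv[OF sm su P(3)] inv_f_f[OF inj] by (intro exI[of _ "f ` P"]) auto
  ultimately show ?thesis unfolding dyadic_PL_def using strict_mono_surj_inv[OF sm su] by blast
qed

lemma translation_dyadic_linear:
  assumes "\<forall>t\<in>{of_int i..of_int i + 1}. f t = t - of_int m"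
  shows "dyadic_linear f (of_int i) (of_int i + 1)"
proof -
  have "f (of_int i) = of_int (i - m)" "f (of_int i + 1) = of_int (i - m) + 1" using assms by auto
  moreover have "\<forall>t\<in>{of_int i..of_int i + 1}. f t = 1 * t + (- of_int m)" using assms by simp
  ultimately show ?thesis
    unfolding dyadic_linear_def affine_on_def using dyadic_interval_unit by metis
qed

lemma dyadic_PL_linear_near_infinity:
  assumes "dyadic_PL f"
  shows "linear_near_infinity f"
proof -
  obtain m a0 n b0 where ends: "\<forall>t\<le>a0. f t = t - of_int m" "\<forall>t\<ge>b0. f t = t - of_int n"
    using assms unfolding dyadic_PL_def by blast
  have "dyadic_linear f (of_int i) (of_int i + 1)" if "i \<notin> {\<lfloor>a0\<rfloor> - 1..\<lceil>b0\<rceil>}" for i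
  proof (cases "i < \<lfloor>a0\<rfloor> - 1")
    case True
    then have "of_int i + 1 \<le> a0" by linarith
    then show ?thesis using ends(1) by (intro translation_dyadic_linear) auto
  next
    case False
    then have "b0 \<le> of_int i" using that by auto linarith
    then show ?thesis using ends(2) by (intro translation_dyadic_linear) auto
  qed
  then have "{i. \<not> dyadic_linear f (of_int i) (of_int i + 1)} \<subseteq> {\<lfloor>a0\<rfloor> - 1..\<lceil>b0\<rceil>}" by blast
  then show ?thesis unfolding linear_near_infinity_def using finite_subset by blast
qed

lemma Ints_mult_power2_mono:
  fixes x :: real
  assumes "x * 2 ^ m \<in> \<int>" "m \<le> n"
  shows "x * 2 ^ n \<in> \<int>"
proof -
  obtain e where "n = m + e" using assms(2) le_Suc_ex by blast
  then have "x * 2 ^ n = (x * 2 ^ m) * 2 ^ e" by (simp add: power_add)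
  then show ?thesis by (simp only:) (rule Ints_mult[OF assms(1)], simp)
qed

lemma finite_dyadic_common_level: "finite P \<Longrightarrow> \<forall>x\<in>P. dyadic x \<Longrightarrow> \<exists>E. \<forall>x\<in>P. x * 2 ^ E \<in> \<int>"
proof (induction P rule: finite_induct)
  case (insert x P)
  then obtain E where E: "\<forall>y\<in>P. y * 2 ^ E \<in> \<int>" by auto
  obtain k n where "x = of_int k / 2 ^ n" using insert.prems unfolding dyadic_def by auto
  then have "x * 2 ^ n \<in> \<int>" by simp
  then have "\<forall>y\<in>insert x P. y * 2 ^ max E n \<in> \<int>"
    using E Ints_mult_power2_mono[of _ E "max E n"] Ints_mult_power2_mono[of x n "max E n"] by auto
  then show ?case by blast
qed simp

lemma finite_bounded_choice:
  assumes "finite S" "\<forall>z\<in>S. \<exists>k::int. Q z k"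
  shows "\<exists>lo hi. \<forall>z\<in>S. \<exists>k. lo \<le> k \<and> k \<le> hi \<and> Q z k"
proof -
  obtain g where g: "\<forall>z\<in>S. Q z (g z)" using bchoice[OF assms(2)] by blast
  have "\<forall>z\<in>S. Min (g ` S) \<le> g z \<and> g z \<le> Max (g ` S) \<and> Q z (g z)"
    using assms(1) g by simp
  then show ?thesis by blast
qed

lemma power_int_two_eq_divide:
  assumes "- int q \<le> k"
  shows "(2::real) powi k = 2 ^ nat (k + int q) / 2 ^ q"
proof -
  have "(2::real) powi k = 2 powi ((k + int q) - int q)" by simp
  also have "\<dots> = 2 powi (k + int q) / 2 powi int q" by (rule power_int_diff) simp
  also have "2 powi (k + int q) = (2::real) powi int (nat (k + int q))" using assms by simp
  finally show ?thesis by (simp only: power_int_of_nat)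
qed

lemma dyadic_PL_cells_affine:
  assumes "dyadic_PL f"
  shows "\<exists>E. \<forall>z::int. \<exists>k::int. \<exists>c.
    \<forall>t\<in>{of_int z / 2 ^ E..(of_int z + 1) / 2 ^ E}. f t = 2 powi k * t + c"
proof -
  obtain P where P: "finite P" "\<forall>x\<in>P. dyadic x"
    "\<forall>a b. a < b \<and> {a<..<b} \<inter> P = {} \<longrightarrow> (\<exists>k::int. \<exists>c. \<forall>t\<in>{a..b}. f t = 2 powi k * t + c)"
    using assms unfolding dyadic_PL_def by blast
  obtain E where E: "\<forall>x\<in>P. x * 2 ^ E \<in> \<int>" using finite_dyadic_common_level[OF P(1,2)] by blast
  have "{of_int z / 2 ^ E<..<(of_int z + 1) / 2 ^ E} \<inter> P = {}" for z :: int
  proof (rule ccontr)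
    assume "{of_int z / 2 ^ E<..<(of_int z + 1) / 2 ^ E} \<inter> P \<noteq> {}"
    then obtain p where p: "p \<in> P" "of_int z < p * 2 ^ E" "p * 2 ^ E < of_int z + 1"
      by (auto simp: field_simps)
    obtain w where "p * 2 ^ E = of_int w" using E p(1) Ints_cases by metis
    then show False using p(2,3) by simp
  qed
  moreover have "of_int z / 2 ^ E < (of_int z + 1) / (2 ^ E :: real)" for z :: int
    by (simp add: divide_strict_right_mono)
  ultimately show ?thesis using P(3) by blast
qed

text \<open>A slope 2 powi k with k \<ge> -q is written as 2^u / 2^q, u a natural number.\<close>
lemma dyadic_PL_cells:
  assumes "dyadic_PL f"
  shows "\<exists>E q U. \<forall>z::int. \<exists>u c. u \<le> U \<and>
           (\<forall>t\<in>{of_int z / 2 ^ E..(of_int z + 1) / 2 ^ E}. f t = 2 ^ u / 2 ^ q * t + c)"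
proof -
  obtain E where cells:
    "\<forall>z::int. \<exists>k::int. \<exists>c. \<forall>t\<in>{of_int z / 2 ^ E..(of_int z + 1) / 2 ^ E}. f t = 2 powi k * t + c"
    using dyadic_PL_cells_affine[OF assms] by blast
  let ?affine = "\<lambda>z k. \<exists>c. \<forall>t\<in>{of_int z / 2 ^ E..(of_int z + 1) / 2 ^ E}. f t = 2 powi k * t + c"
  obtain m a0 n b0 where ends: "\<forall>t\<le>a0. f t = t - of_int m" "\<forall>t\<ge>b0. f t = t - of_int n"
    using assms unfolding dyadic_PL_def by blast
  define zlo where "zlo = \<lfloor>a0 * 2 ^ E\<rfloor> - 1"
  define zhi where "zhi = \<lceil>b0 * 2 ^ E\<rceil>"
  obtain lo hi where bounded: "\<forall>z\<in>{zlo..zhi}. \<exists>k. lo \<le> k \<and> k \<le> hi \<and> ?affine z k"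
    using finite_bounded_choice[of "{zlo..zhi}" ?affine] cells by blast
  have slope: "\<exists>k. min lo 0 \<le> k \<and> k \<le> max hi 0 \<and> ?affine z k" for z
  proof (cases "z \<in> {zlo..zhi}")
    case True
    then obtain k where "lo \<le> k" "k \<le> hi" "?affine z k" using bounded by blast
    then show ?thesis by (intro exI[of _ k]) (simp add: min_le_iff_disj le_max_iff_disj)
  next
    case False
    then have "(of_int z + 1) / 2 ^ E \<le> a0 \<or> b0 \<le> of_int z / 2 ^ E"
      unfolding zlo_def zhi_def by (auto simp: field_simps) linarith+
    then have "?affine z 0" using ends by force
    then show ?thesis by (intro exI[of _ 0]) simp
  qed
  define q where "q = nat (- min lo 0)"
  have "\<exists>u c. u \<le> nat (max hi 0) + q \<and>
      (\<forall>t\<in>{of_int z / 2 ^ E..(of_int z + 1) / 2 ^ E}. f t = 2 ^ u / 2 ^ q * t + c)" for z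
  proof -
    obtain k c where k: "min lo 0 \<le> k" "k \<le> max hi 0"
      and c: "\<forall>t\<in>{of_int z / 2 ^ E..(of_int z + 1) / 2 ^ E}. f t = 2 powi k * t + c"
      using slope by blast
    have "- int q \<le> k" using k(1) unfolding q_def by simp
    then have "(2::real) powi k = 2 ^ nat (k + int q) / 2 ^ q" by (rule power_int_two_eq_divide)
    moreover have "nat (k + int q) \<le> nat (max hi 0) + q" using k(2) by simp
    ultimately show ?thesis using c by metis
  qed
  then show ?thesis by blast
qed

lemma dyadic_cell_values:
  fixes f :: "real \<Rightarrow> real"
  assumes cells: "\<forall>z::int. \<exists>u c.
      \<forall>t\<in>{of_int z / 2 ^ E..(of_int z + 1) / 2 ^ E}. f t = 2 ^ u / 2 ^ q * t + c"
    and left: "\<forall>t\<le>a0. f t = t - of_int m"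
  shows "f (of_int z / 2 ^ E) * 2 ^ (E + q) \<in> \<int>"
proof -
  define z0 where "z0 = \<lfloor>a0 * 2 ^ E\<rfloor>"
  have start: "f (of_int z / 2 ^ E) * 2 ^ (E + q) \<in> \<int>" if "z \<le> z0" for z
  proof -
    have "of_int z / 2 ^ E \<le> a0" using that unfolding z0_def by (simp add: field_simps) linarith
    then have "f (of_int z / 2 ^ E) = of_int z / 2 ^ E - of_int m" using left by simp
    then have "f (of_int z / 2 ^ E) * 2 ^ (E + q) = (of_int z / 2 ^ E - of_int m) * (2 ^ E * 2 ^ q)"
      by (simp add: power_add)
    also have "\<dots> = of_int z * 2 ^ q - of_int m * 2 ^ (E + q)" by (simp add: power_add field_simps)
    also have "\<dots> \<in> \<int>" by (intro Ints_diff Ints_mult) simp_all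
    finally show ?thesis .
  qed
  have next_cell: "f (of_int (z + 1) / 2 ^ E) * 2 ^ (E + q) \<in> \<int>"
    if "f (of_int z / 2 ^ E) * 2 ^ (E + q) \<in> \<int>" for z
  proof -
    obtain u c
      where uc: "\<forall>t\<in>{of_int z / 2 ^ E..(of_int z + 1) / 2 ^ E}. f t = 2 ^ u / 2 ^ q * t + c"
      using cells by blast
    have "of_int z / 2 ^ E \<le> (of_int z + 1) / (2 ^ E :: real)" by (simp add: divide_right_mono)
    then have "f ((of_int z + 1) / 2 ^ E) - f (of_int z / 2 ^ E) = 2 ^ u / 2 ^ q * (1 / 2 ^ E)"
      using affine_slope[OF uc, of "of_int z / 2 ^ E" "(of_int z + 1) / 2 ^ E"]
      by (simp add: field_simps)
    then have "f (of_int (z + 1) / 2 ^ E) * 2 ^ (E + q)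
      = f (of_int z / 2 ^ E) * 2 ^ (E + q) + 2 ^ u"
      by (simp add: power_add field_simps)
    then show ?thesis using that by simp
  qed
  show ?thesis
  proof (cases "z \<le> z0")
    case False
    then have "z0 \<le> z" by simp
    then show ?thesis
    proof (induction z rule: int_ge_induct)
      case base
      then show ?case using start by simp
    next
      case (step i)
      then show ?case using next_cell[of i] by simp
    qed
  qed (use start in blast)
qed

lemma dyadic_interval_within_coarser:
  fixes j :: int
  shows "of_int (j div 2 ^ U) / 2 ^ E \<le> of_int j / (2::real) ^ (E + U)"
    and "(of_int j + 1) / 2 ^ (E + U) \<le> (of_int (j div 2 ^ U) + 1) / (2::real) ^ E"
proof -
  define z where "z = j div 2 ^ U"
  have "j = z * 2 ^ U + j mod 2 ^ U" "0 \<le> j mod 2 ^ U" "j mod 2 ^ U < 2 ^ U"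
    unfolding z_def by (simp_all add: div_mult_mod_eq)
  moreover have "(z + 1) * 2 ^ U = z * 2 ^ U + 2 ^ U" by (simp add: algebra_simps)
  ultimately have "z * 2 ^ U \<le> j" "j + 1 \<le> (z + 1) * 2 ^ U" by linarith+
  then have "real_of_int (z * 2 ^ U) \<le> of_int j" "real_of_int (j + 1) \<le> of_int ((z + 1) * 2 ^ U)"
    by (simp_all only: of_int_le_iff)
  then have "of_int z \<le> of_int j / (2::real) ^ U" "(of_int j + 1) / (2::real) ^ U \<le> of_int z + 1"
    by (simp_all add: pos_le_divide_eq pos_divide_le_eq)
  moreover have split: "x / 2 ^ (E + U) = (x / 2 ^ U) / (2::real) ^ E" for x
    by (simp add: power_add)
  ultimately show "of_int z / 2 ^ E \<le> of_int j / (2::real) ^ (E + U)"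
    "(of_int j + 1) / 2 ^ (E + U) \<le> (of_int z + 1) / (2::real) ^ E"
    by (simp_all only: split divide_right_mono zero_le_power zero_le_numeral)
qed

text \<open>Measured from the image of the start of its cell, the image of the interval has its
  length and its left end in 2^-(E+q+w) \<int>.\<close>
lemma cell_subinterval_dyadic_linear:
  fixes f :: "real \<Rightarrow> real"
  assumes "U = u + w" and z: "z = j div 2 ^ U"
    and cell: "\<forall>t\<in>{of_int z / 2 ^ E..(of_int z + 1) / 2 ^ E}. f t = 2 ^ u / 2 ^ q * t + c"
    and start: "f (of_int z / 2 ^ E) * 2 ^ (E + q) \<in> \<int>"
  shows "dyadic_linear f (of_int j / 2 ^ (E + U)) ((of_int j + 1) / 2 ^ (E + U))"
proof -
  let ?a = "of_int j / 2 ^ (E + U) :: real" and ?b = "(of_int j + 1) / 2 ^ (E + U) :: real"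
  let ?z = "of_int z / 2 ^ E :: real"
  have "?z \<le> ?a" "?b \<le> (of_int z + 1) / 2 ^ E"
    using dyadic_interval_within_coarser[where j = j and U = U and E = E] unfolding z by simp_all
  moreover have "?a \<le> ?b" by (simp add: divide_right_mono)
  ultimately have mem: "?z \<in> {?z..(of_int z + 1) / 2 ^ E}" "?a \<in> {?z..(of_int z + 1) / 2 ^ E}"
    "?b \<in> {?z..(of_int z + 1) / 2 ^ E}" by auto
  have slope: "(2::real) ^ u / 2 ^ q * (x * (1 / 2 ^ (E + U))) = x * (1 / 2 ^ (E + q + w))" for x
    unfolding assms(1) by (simp add: power_add)
  have "dyadic_interval ?a ?b" unfolding dyadic_interval_def by blast
  moreover have "affine_on f ?a ?b"
    using cell mem unfolding affine_on_def by (meson atLeastAtMost_iff order_trans)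
  moreover have "f ?b - f ?a = 1 / 2 ^ (E + q + w)"
  proof -
    have "?b - ?a = 1 * (1 / 2 ^ (E + U))" by (simp add: field_simps)
    then show ?thesis using affine_slope[OF cell mem(2,3)] slope[of 1] by simp
  qed
  moreover have "f ?a * 2 ^ (E + q + w)
    = f ?z * 2 ^ (E + q) * 2 ^ w + (of_int j - of_int z * 2 ^ U)"
  proof -
    have "?a - ?z = (of_int j - of_int z * 2 ^ U) * (1 / 2 ^ (E + U))"
      by (simp add: field_simps power_add)
    then have "f ?a - f ?z = (of_int j - of_int z * 2 ^ U) * (1 / 2 ^ (E + q + w))"
      using affine_slope[OF cell mem(1,2)] slope by simp
    then show ?thesis by (simp add: field_simps power_add)
  qed
  moreover have "f ?z * 2 ^ (E + q) * 2 ^ w + (of_int j - of_int z * 2 ^ U) \<in> \<int>"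
    using Ints_mult[OF start, of "2 ^ w"] by (intro Ints_add Ints_diff) simp_all
  ultimately show ?thesis unfolding dyadic_linear_def dyadic_interval_iff[of "f ?a"] by auto
qed

lemma dyadic_PL_linear_at_level:
  assumes "dyadic_PL f"
  shows "\<exists>n. linear_at_level f n"
proof -
  obtain E q U where cells: "\<forall>z::int. \<exists>u c. u \<le> U \<and>
      (\<forall>t\<in>{of_int z / 2 ^ E..(of_int z + 1) / 2 ^ E}. f t = 2 ^ u / 2 ^ q * t + c)"
    using dyadic_PL_cells[OF assms] by blast
  obtain m a0 where "\<forall>t\<le>a0. f t = t - of_int m" using assms unfolding dyadic_PL_def by blast
  then have starts: "f (of_int z / 2 ^ E) * 2 ^ (E + q) \<in> \<int>" for z
    using dyadic_cell_values[of E f q] cells by blast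
  have "dyadic_linear f (of_int j / 2 ^ (E + U)) ((of_int j + 1) / 2 ^ (E + U))" for j :: int
  proof -
    obtain u c where "u \<le> U"
      and cell: "\<forall>t\<in>{of_int (j div 2 ^ U) / 2 ^ E..(of_int (j div 2 ^ U) + 1) / 2 ^ E}.
        f t = 2 ^ u / 2 ^ q * t + c"
      using cells by blast
    then obtain w where "U = u + w" using le_Suc_ex by blast
    from cell_subinterval_dyadic_linear[OF this refl cell starts] show ?thesis .
  qed
  then show ?thesis unfolding linear_at_level_def by blast
qed

section \<open>The reduced forest diagram of an element of F\<close>

lemma reduced_diagram_eqI:
  assumes "strict_mono f" "surj f" "forest_diagram f B T" "reduced f B T"
  shows "reduced_diagram f = (B, T)"
  unfolding reduced_diagram_def
  using reduced_forest_diagram_unique[OF assms(1,2)] assms(3,4) by (intro the_equality) auto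

lemma thompsonF_reduced_diagram:
  assumes "f \<in> thompsonF"
  shows "forest_diagram f (bottom_forest f) (top_forest f)"
    "reduced f (bottom_forest f) (top_forest f)"
proof -
  have PL: "dyadic_PL f" "dyadic_PL (inv f)"
    using thompsonF_dyadic_PL[OF assms] dyadic_PL_inv by auto
  then have "strict_mono f" "surj f" unfolding dyadic_PL_def by auto
  obtain n m where "linear_at_level f n" "linear_at_level (inv f) m"
    using dyadic_PL_linear_at_level PL by blast
  from reduced_forest_diagram_exists[OF \<open>strict_mono f\<close> \<open>surj f\<close> this
      dyadic_PL_linear_near_infinity[OF PL(1)] dyadic_PL_linear_near_infinity[OF PL(2)]]
  obtain B T where "forest_diagram f B T" "reduced f B T" by blast
  moreover from reduced_diagram_eqI[OF \<open>strict_mono f\<close> \<open>surj f\<close> this]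
  have "bottom_forest f = B" "top_forest f = T" unfolding bottom_forest_def top_forest_def
    by simp_all
  ultimately show "forest_diagram f (bottom_forest f) (top_forest f)"
    "reduced f (bottom_forest f) (top_forest f)" by simp_all
qed

lemma translate_forest_sets:
  assumes "\<And>a b t. S (a + of_int s) (b + of_int s) t
    = (\<lambda>(x, y). (x + of_int s, y + of_int s)) ` S a b t"
  shows "(c, d) \<in> (\<Union>j. S (of_int j) (of_int j + 1) (F (j - s))) \<longleftrightarrow>
         (c - of_int s, d - of_int s) \<in> (\<Union>i. S (of_int i) (of_int i + 1) (F i))"
proof -
  have "S (of_int j) (of_int j + 1) (F (j - s)) =
      (\<lambda>(x, y). (x + of_int s, y + of_int s)) `
        S (of_int (j - s)) (of_int (j - s) + 1) (F (j - s))" for j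
    using assms[of "of_int (j - s)" "of_int (j - s) + 1"] by simp
  then have "(c, d) \<in> (\<Union>j. S (of_int j) (of_int j + 1) (F (j - s))) \<longleftrightarrow>
      (\<exists>j. (c - of_int s, d - of_int s) \<in> S (of_int (j - s)) (of_int (j - s) + 1) (F (j - s)))"
    by force
  also have "\<dots> \<longleftrightarrow> (\<exists>i. (c - of_int s, d - of_int s) \<in> S (of_int i) (of_int i + 1) (F i))"
    by (metis add_diff_cancel_right')
  finally show ?thesis by blast
qed

lemma mem_fleaves_translate:
  "(c, d) \<in> fleaves (\<lambda>j. F (j - s)) \<longleftrightarrow> (c - of_int s, d - of_int s) \<in> fleaves F"
  unfolding fleaves_def by (rule translate_forest_sets[where S = leaves, OF leaves_translate])

lemma mem_fcarets_translate:
  "(c, d) \<in> fcarets (\<lambda>j. F (j - s)) \<longleftrightarrow> (c - of_int s, d - of_int s) \<in> fcarets F"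
  unfolding fcarets_def by (rule translate_forest_sets[where S = carets, OF carets_translate])

lemma mem_felem_carets_translate:
  "(c, d) \<in> felem_carets (\<lambda>j. F (j - s)) \<longleftrightarrow> (c - of_int s, d - of_int s) \<in> felem_carets F"
  unfolding felem_carets_def
  by (rule translate_forest_sets[where S = elem_carets, OF elem_carets_translate])

lemma nontrivial_trees_translate:
  fixes F :: forest
  shows "{j. F (j - s) \<noteq> Leaf} = (\<lambda>i. i + s) ` {i. F i \<noteq> Leaf}"
proof (intro set_eqI iffI)
  fix j assume "j \<in> {j. F (j - s) \<noteq> Leaf}"
  then show "j \<in> (\<lambda>i. i + s) ` {i. F i \<noteq> Leaf}" by (intro image_eqI[of _ _ "j - s"]) simp_all
qed auto

lemma is_forest_translate: "is_forest (\<lambda>j. F (j - s)) \<longleftrightarrow> is_forest F"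
  unfolding is_forest_def nontrivial_trees_translate by (simp add: finite_image_iff)

lemma fncarets_translate: "fncarets (\<lambda>j. F (j - s)) = fncarets F"
  unfolding fncarets_def nontrivial_trees_translate by (simp add: sum.reindex)

lemma inv_x0: "inv x0 = (\<lambda>t. t + 1)"
proof
  fix y
  have "inj x0" unfolding x0_def by (simp add: inj_on_def)
  moreover have "x0 (y + 1) = y" unfolding x0_def by simp
  ultimately show "inv x0 y = y + 1" by (metis inv_f_f)
qed

lemma reduced_diagram_inv_x0:
  assumes "f \<in> thompsonF"
  shows "bottom_forest (inv x0 \<circ> f) = bottom_forest f"
    and "top_forest (inv x0 \<circ> f) = (\<lambda>j. top_forest f (j - 1))"
proof -
  let ?g = "inv x0 \<circ> f" and ?B = "bottom_forest f" and ?T = "top_forest f"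
  note diagram = thompsonF_reduced_diagram(1)[OF assms]
  have g: "?g t = f t + 1" for t unfolding inv_x0 by simp
  have "strict_mono f" "surj f" using assms unfolding thompsonF_def by blast+
  then have "strict_mono ?g" "surj ?g"
    unfolding strict_mono_def g
    by (simp, intro surjI[of _ "\<lambda>y. inv f (y - 1)"], simp add: surj_f_inv_f)
  moreover have "forest_diagram ?g ?B (\<lambda>j. ?T (j - 1))"
    unfolding forest_diagram_def is_forest_translate
  proof (intro conjI ballI)
    show "is_forest ?B" "is_forest ?T" using diagram unfolding forest_diagram_def by simp_all
  next
    fix p assume "p \<in> fleaves ?B"
    moreover obtain a b where p: "p = (a, b)" by fastforce
    ultimately have "(f a, f b) \<in> fleaves ?T" and "\<exists>s c. \<forall>t\<in>{a..b}. f t = s * t + c"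
      using diagram unfolding forest_diagram_def by auto
    then obtain s c where "(f a, f b) \<in> fleaves ?T" "\<forall>t\<in>{a..b}. f t = s * t + c" by blast
    then have "(?g a, ?g b) \<in> fleaves (\<lambda>j. ?T (j - 1))" "\<forall>t\<in>{a..b}. ?g t = s * t + (c + 1)"
      unfolding mem_fleaves_translate g by simp_all
    then show "case p of (a, b) \<Rightarrow> (?g a, ?g b) \<in> fleaves (\<lambda>j. ?T (j - 1)) \<and>
        (\<exists>s c. \<forall>t\<in>{a..b}. ?g t = s * t + c)"
      unfolding p by blast
  qed
  moreover have "reduced ?g ?B (\<lambda>j. ?T (j - 1))"
    using thompsonF_reduced_diagram(2)[OF assms]
    unfolding reduced_def mem_felem_carets_translate g by simp
  ultimately have "reduced_diagram ?g = (?B, \<lambda>j. ?T (j - 1))" by (rule reduced_diagram_eqI)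
  then show "bottom_forest ?g = ?B" "top_forest ?g = (\<lambda>j. ?T (j - 1))"
    unfolding bottom_forest_def top_forest_def by simp_all
qed

section \<open>Moving the top pointer of an element of F\<close>

lemma caret_at_integer_iff: "(\<exists>b. (of_int z, b) \<in> fcarets F) \<longleftrightarrow> F z \<noteq> Leaf"
proof
  assume "\<exists>b. (of_int z, b) \<in> fcarets F"
  then show "F z \<noteq> Leaf" unfolding mem_fcarets_floor_iff by auto
next
  assume "F z \<noteq> Leaf"
  then have "(of_int z, of_int z + 1) \<in> fcarets F"
    unfolding mem_fcarets_iff using root_in_carets by blast
  then show "\<exists>b. (of_int z, b) \<in> fcarets F" ..
qed

lemma label_translate:
  "label (\<lambda>j. F (j - 1)) (x + 1) = (if x = 0 then if F 0 \<noteq> Leaf then N else R else label F x)"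
proof -
  have carets: "(\<exists>b. (x + 1, b) \<in> fcarets (\<lambda>j. F (j - 1))) \<longleftrightarrow> (\<exists>b. (x, b) \<in> fcarets F)"
    using mem_fcarets_translate[of "x + 1" _ F 1] by (metis add_diff_cancel_right' of_int_1)
  have ints: "x + 1 \<in> \<int> \<longleftrightarrow> x \<in> \<int>"
    by (metis Ints_1 Ints_add Ints_diff add_diff_cancel_right')
  have "x \<in> \<int> \<Longrightarrow> x \<noteq> 0 \<Longrightarrow> x \<le> 0 \<Longrightarrow> x + 1 \<le> 0" by (elim Ints_cases) simp
  then have left: "x \<noteq> 0 \<Longrightarrow> (x + 1 \<in> \<int> \<and> x + 1 \<le> 0) \<longleftrightarrow> (x \<in> \<int> \<and> x \<le> 0)"
    using ints by auto
  show ?thesis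
  proof (cases "x = 0")
    case True
    then show ?thesis using carets caret_at_integer_iff[of 0 F] unfolding label_def by simp
  next
    case False
    then show ?thesis using carets ints left unfolding label_def by simp
  qed
qed

lemma weight_L_ge_1: "1 \<le> weight L y"
  by (cases y) simp_all

lemma Collect_int_shift: "{h (j - 1) | j::int. P (j - 1)} = {h j | j. P j}"
proof (intro set_eqI iffI)
  fix x assume "x \<in> {h j | j. P j}"
  then obtain j where "x = h j" "P j" by blast
  then show "x \<in> {h (j - 1) | j::int. P (j - 1)}" by (intro CollectI exI[of _ "j + 1"]) simp
qed blast

locale thompson_element =
  fixes f :: "real \<Rightarrow> real"
  assumes in_F: "f \<in> thompsonF"
begin

abbreviation "B \<equiv> bottom_forest f"
abbreviation "T \<equiv> top_forest f"
abbreviation "g \<equiv> inv f"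
abbreviation "f' \<equiv> inv x0 \<circ> f"
abbreviation "T' \<equiv> \<lambda>j. T (j - 1)"

lemma f_strict_mono: "strict_mono f" and f_surj: "surj f"
  using in_F unfolding thompsonF_def by blast+

lemma g_f [simp]: "g (f x) = x"
  using inv_f_f[OF strict_mono_imp_inj_on[OF f_strict_mono]] .

lemma f_g [simp]: "f (g y) = y"
  using surj_f_inv_f[OF f_surj] .

lemma f_less_iff [simp]: "f a < f b \<longleftrightarrow> a < b"
  using strict_mono_less[OF f_strict_mono] .

lemma f_eq_iff [simp]: "f a = f b \<longleftrightarrow> a = b"
  using strict_mono_eq[OF f_strict_mono] .

lemma g_less_iff [simp]: "g a < g b \<longleftrightarrow> a < b"
  using strict_mono_less[OF strict_mono_surj_inv(1)[OF f_strict_mono f_surj]] .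

lemma f'_eq: "f' t = f t + 1"
  unfolding inv_x0 by simp

lemma inv_f'_eq: "inv f' y = g (y - 1)"
proof -
  have "inj f'" unfolding inj_def inv_x0 by simp
  moreover have "f' (g (y - 1)) = y" unfolding inv_x0 by simp
  ultimately show ?thesis by (metis inv_f_f)
qed

lemma diagram: "forest_diagram f B T"
  using thompsonF_reduced_diagram(1)[OF in_F] .

lemma top_fleaves: "fleaves T = (\<lambda>(a, b). (f a, f b)) ` fleaves B"
  using forest_diagram_top_leaves[OF f_strict_mono f_surj diagram] .

lemma bottom_forest_f': "bottom_forest f' = B" and top_forest_f': "top_forest f' = T'"
  using reduced_diagram_inv_x0[OF in_F] by simp_all

definition column_boundary :: "real \<Rightarrow> bool" where
  "column_boundary p \<longleftrightarrow> (\<forall>(a, b)\<in>fleaves B. \<not> (a < p \<and> p < b))"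

lemma column_boundary_of_int: "column_boundary (of_int z)"
  unfolding column_boundary_def using integer_not_inside_fleaves by blast

lemma column_boundary_g_of_int: "column_boundary (g (of_int z))"
  unfolding column_boundary_def
proof clarify
  fix a b assume "(a, b) \<in> fleaves B" "a < g (of_int z)" "g (of_int z) < b"
  then have "(f a, f b) \<in> fleaves T" "f a < of_int z" "of_int z < f b"
    using top_fleaves f_less_iff[of a "g (of_int z)"] f_less_iff[of "g (of_int z)" b] by auto
  then show False using integer_not_inside_fleaves by blast
qed

lemma spaces_not_inside: "p \<in> spaces B \<Longrightarrow> column_boundary p"
  unfolding spaces_def column_boundary_def using fleaves_not_inside by blast

lemma left_space_in_spaces: "g 0 \<in> spaces B"
proof -
  obtain c d where cd: "(c, d) \<in> fleaves T" "c \<le> 0" "0 < d" using fleaves_cover[of T 0] by blast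
  have "\<not> c < 0" using integer_not_inside_fleaves[OF cd(1), of 0] cd(3) by simp
  then have "c = 0" using cd(2) by simp
  then obtain a b where ab: "(a, b) \<in> fleaves B" "f a = 0" using cd(1) top_fleaves by auto
  then have "a = g 0" using g_f[of a] by simp
  then show ?thesis using ab(1) unfolding spaces_def by blast
qed

lemma bottom_leaf_if_trivial: "T z = Leaf \<Longrightarrow> (g (of_int z), g (of_int z + 1)) \<in> fleaves B"
proof -
  assume "T z = Leaf"
  then have "(of_int z, of_int z + 1) \<in> fleaves T"
    by (auto simp: mem_fleaves_iff intro: exI[of _ z])
  then show ?thesis using top_fleaves by (auto simp del: of_int_add)
qed

text \<open>Apart from the two pointer trees, these points delimit the support; they are the same
  for f and for inv x0 \<circ> f.\<close>
definition lower_marks :: "real set" where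
  "lower_marks = {of_int i | i. B i \<noteq> Leaf} \<union> {g (of_int j) | j. T j \<noteq> Leaf}"

definition upper_marks :: "real set" where
  "upper_marks = {of_int i + 1 | i. B i \<noteq> Leaf} \<union> {g (of_int j + 1) | j. T j \<noteq> Leaf}"

lemma finite_marks: "finite lower_marks" "finite upper_marks"
proof -
  have "finite {i. B i \<noteq> Leaf}" "finite {j. T j \<noteq> Leaf}"
    using diagram unfolding forest_diagram_def is_forest_def by auto
  then show "finite lower_marks" "finite upper_marks"
    unfolding lower_marks_def upper_marks_def
    by (auto simp: setcompr_eq_image)
qed

lemma column_boundary_marks: "x \<in> lower_marks \<Longrightarrow> column_boundary x"
  "x \<in> upper_marks \<Longrightarrow> column_boundary x"
proof -
  assume "x \<in> lower_marks"
  then show "column_boundary x"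
    unfolding lower_marks_def using column_boundary_of_int column_boundary_g_of_int by blast
next
  assume "x \<in> upper_marks"
  then obtain i where "x = of_int (i + 1) \<or> x = g (of_int (i + 1))" unfolding upper_marks_def
    by auto
  then show "column_boundary x" using column_boundary_of_int column_boundary_g_of_int by blast
qed

lemma shifted_top_marks:
  "{inv f' (of_int j) | j. T' j \<noteq> Leaf} = {g (of_int j) | j. T j \<noteq> Leaf}"
  "{inv f' (of_int j + 1) | j. T' j \<noteq> Leaf} = {g (of_int j + 1) | j. T j \<noteq> Leaf}"
  using Collect_int_shift[of "\<lambda>j. g (of_int j)" "\<lambda>j. T j \<noteq> Leaf"]
    Collect_int_shift[of "\<lambda>j. g (of_int j + 1)" "\<lambda>j. T j \<noteq> Leaf"]
  unfolding inv_f'_eq by simp_all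

abbreviation "lo \<equiv> supp_lo f B T"
abbreviation "hi \<equiv> supp_hi f B T"
abbreviation "lo' \<equiv> supp_lo f' B T'"
abbreviation "hi' \<equiv> supp_hi f' B T'"

lemma lo_eq: "lo = Min (insert 0 (insert (g 0) lower_marks))"
  unfolding supp_lo_def lower_marks_def by (simp add: insert_commute)

lemma lo'_eq: "lo' = Min (insert 0 (insert (g (- 1)) lower_marks))"
  unfolding supp_lo_def shifted_top_marks unfolding lower_marks_def inv_f'_eq
  by (simp add: insert_commute)

lemma hi_eq: "hi = Max (insert 1 (insert (g 1) upper_marks))"
  unfolding supp_hi_def upper_marks_def by (simp add: insert_commute)

lemma hi'_eq: "hi' = Max (insert 1 (insert (g 0) upper_marks))"
  unfolding supp_hi_def shifted_top_marks unfolding upper_marks_def inv_f'_eq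
  by (simp add: insert_commute)

lemma lo_bounds: "lo \<le> 0" "lo \<le> g 0" "x \<in> lower_marks \<Longrightarrow> lo \<le> x"
  "lo \<in> insert 0 (insert (g 0) lower_marks)"
  unfolding lo_eq by (intro Min_le Min_in; simp add: finite_marks)+

lemma lo'_bounds: "lo' \<le> 0" "lo' \<le> g (- 1)" "x \<in> lower_marks \<Longrightarrow> lo' \<le> x"
  "lo' \<in> insert 0 (insert (g (- 1)) lower_marks)"
  unfolding lo'_eq by (intro Min_le Min_in; simp add: finite_marks)+

lemma hi_bounds: "1 \<le> hi" "g 1 \<le> hi" "x \<in> upper_marks \<Longrightarrow> x \<le> hi"
  "hi \<in> insert 1 (insert (g 1) upper_marks)"
  unfolding hi_eq by (intro Max_ge Max_in; simp add: finite_marks)+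

lemma hi'_bounds: "1 \<le> hi'" "g 0 \<le> hi'" "x \<in> upper_marks \<Longrightarrow> x \<le> hi'"
  "hi' \<in> insert 1 (insert (g 0) upper_marks)"
  unfolding hi'_eq by (intro Max_ge Max_in; simp add: finite_marks)+

lemma lo'_le_lo: "lo' \<le> lo"
proof -
  have "g (- 1) \<le> g 0" using less_imp_le[of "g (- 1)" "g 0"] by simp
  then have "lo' \<le> x" if "x \<in> insert 0 (insert (g 0) lower_marks)" for x
    using that lo'_bounds(1-3) by auto
  then show ?thesis using lo_bounds(4) by blast
qed

lemma hi'_le_hi: "hi' \<le> hi"
proof -
  have "g 0 \<le> g 1" using less_imp_le[of "g 0" "g 1"] by simp
  then have "x \<le> hi" if "x \<in> insert 1 (insert (g 0) upper_marks)" for x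
    using that hi_bounds(1-3) by auto
  then show ?thesis using hi'_bounds(4) by blast
qed

lemma lo'_less_lo:
  assumes "lo' < lo"
  shows "lo' = g (- 1)" "lo = g 0" "T (- 1) = Leaf"
proof -
  show lo': "lo' = g (- 1)" using lo'_bounds(4) assms lo_bounds(1,3) by fastforce
  show T: "T (- 1) = Leaf"
  proof (rule ccontr)
    assume "T (- 1) \<noteq> Leaf"
    then have "g (- 1) \<in> lower_marks" unfolding lower_marks_def by (auto intro!: exI[of _ "- 1"])
    then show False using lo_bounds(3) lo' assms by fastforce
  qed
  have "column_boundary lo"
    using lo_bounds(4) column_boundary_marks(1) column_boundary_of_int[of 0]
      column_boundary_g_of_int[of 0]
    by auto
  moreover have "(g (- 1), g 0) \<in> fleaves B" using bottom_leaf_if_trivial[OF T] by simp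
  ultimately have "\<not> lo < g 0" using lo' assms unfolding column_boundary_def by fastforce
  then show "lo = g 0" using lo_bounds(2) by simp
qed

lemma hi'_less_hi:
  assumes "hi' < hi"
  shows "hi = g 1" "hi' = g 0" "T 0 = Leaf"
proof -
  show hi: "hi = g 1" using hi_bounds(4) assms hi'_bounds(1,3) by fastforce
  show T: "T 0 = Leaf"
  proof (rule ccontr)
    assume "T 0 \<noteq> Leaf"
    then have "g 1 \<in> upper_marks" unfolding upper_marks_def by (auto intro!: exI[of _ 0])
    then show False using hi'_bounds(3) hi assms by fastforce
  qed
  have "column_boundary hi'"
    using hi'_bounds(4) column_boundary_marks(2) column_boundary_of_int[of 1]
      column_boundary_g_of_int[of 0]
    by auto
  moreover have "(g 0, g 1) \<in> fleaves B" using bottom_leaf_if_trivial[OF T] by simp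
  ultimately have "\<not> g 0 < hi'" using hi assms unfolding column_boundary_def by fastforce
  then show "hi' = g 0" using hi'_bounds(2) by simp
qed

definition space_weight :: "real \<Rightarrow> nat" where
  "space_weight p = weight (label T (f p)) (label B p)"

definition space_weight' :: "real \<Rightarrow> nat" where
  "space_weight' p = weight (label T' (f' p)) (label B p)"

abbreviation "spaces_between u v \<equiv> {p \<in> spaces B. u < p \<and> p < v}"
abbreviation "columns_between u v \<equiv> {(a, b) \<in> fleaves B. u \<le> a \<and> b \<le> v}"

lemma ell_eq: "ell f = (\<Sum>p\<in>spaces_between lo hi. space_weight p) + ell1 f"
  unfolding ell_def ell0_def space_weight_def support_spaces_def ..

lemma ell_f'_eq: "ell f' = (\<Sum>p\<in>spaces_between lo' hi'. space_weight' p) + ell1 f"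
  unfolding ell_def ell0_def ell1_def space_weight'_def support_spaces_def
    bottom_forest_f' top_forest_f' fncarets_translate ..

lemma support_size_eq: "support_size f = card (columns_between lo hi)"
  unfolding support_size_def support_columns_def ..

lemma support_size_f'_eq: "support_size f' = card (columns_between lo' hi')"
  unfolding support_size_def support_columns_def bottom_forest_f' top_forest_f' ..

lemma space_weight'_eq: "p \<noteq> g 0 \<Longrightarrow> space_weight' p = space_weight p"
proof -
  assume "p \<noteq> g 0"
  then have "f p \<noteq> 0" by (metis g_f)
  then show ?thesis unfolding space_weight'_def space_weight_def f'_eq label_translate by simp
qed

lemma space_weight_left_space: "space_weight (g 0) = weight L (label B (g 0))"
  unfolding space_weight_def label_def by simp

lemma space_weight'_left_space:
  "space_weight' (g 0) = weight (if T 0 \<noteq> Leaf then N else R) (label B (g 0))"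
  unfolding space_weight'_def f'_eq f_g using label_translate[of T 0] by simp

lemma label_pair_left_space:
  "label_pair f (left_space f)
    = (if g 0 \<in> spaces_between lo hi then Some (L, label B (g 0)) else None)"
  unfolding label_pair_def left_space_def support_spaces_def label_def by simp

lemma finite_spaces_columns: "finite (spaces_between u v)" "finite (columns_between u v)"
  using finite_spaces_between finite_fleaves_within by blast+

lemma support_grows_left:
  assumes "lo' < lo"
  shows "ell f \<le> ell f'" "support_size f \<le> support_size f'" "label_pair f (left_space f) = None"
proof -
  note lo = lo'_less_lo[OF assms]
  \<comment> \<open>the right end cannot move as well, since g 0 = lo \<le> 0 < 1 \<le> hi'\<close>
  have hi: "hi' = hi" using hi'_le_hi hi'_less_hi(2) lo(2) lo_bounds(1) hi'_bounds(1) by fastforce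
  let ?S = "spaces_between lo hi"
  have leaf: "(g (- 1), g 0) \<in> fleaves B" using bottom_leaf_if_trivial[OF lo(3)] by simp
  have "g 0 < hi" using hi_bounds(2) g_less_iff[of 0 1] by linarith
  then have spaces: "spaces_between lo' hi' = insert (g 0) ?S"
    using lo hi left_space_in_spaces spaces_not_inside leaf g_less_iff[of "- 1" 0]
    unfolding column_boundary_def by fastforce
  have "g 0 \<notin> ?S" using lo(2) by simp
  moreover from this have "(\<Sum>p\<in>?S. space_weight' p) = (\<Sum>p\<in>?S. space_weight p)"
    by (intro sum.cong refl space_weight'_eq) blast
  ultimately have "(\<Sum>p\<in>spaces_between lo' hi'. space_weight' p) =
      space_weight' (g 0) + (\<Sum>p\<in>?S. space_weight p)"
    unfolding spaces using finite_spaces_columns(1) by simp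
  then show "ell f \<le> ell f'" unfolding ell_eq ell_f'_eq by simp
  have "columns_between lo hi \<subseteq> columns_between lo' hi'" using assms hi by auto
  then show "support_size f \<le> support_size f'"
    unfolding support_size_eq support_size_f'_eq by (intro card_mono finite_spaces_columns)
  show "label_pair f (left_space f) = None" unfolding label_pair_left_space using lo(2) by simp
qed

lemma support_shrinks_right:
  assumes "hi' < hi"
  shows "ell f' < ell f" "support_size f' < support_size f"
proof -
  note hi = hi'_less_hi[OF assms]
  \<comment> \<open>the left end cannot move as well, since lo' \<le> 0 < 1 \<le> hi' = g 0\<close>
  have lo: "lo' = lo" using lo'_le_lo lo'_less_lo(2) hi(2) lo_bounds(1) hi'_bounds(1) by fastforce
  let ?S = "spaces_between lo' hi'"
  have leaf: "(g 0, g 1) \<in> fleaves B" using bottom_leaf_if_trivial[OF hi(3)] by simp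
  have "lo < g 0" using lo lo'_bounds(2) g_less_iff[of "- 1" 0] by linarith
  then have spaces: "spaces_between lo hi = insert (g 0) ?S"
    using lo hi left_space_in_spaces spaces_not_inside leaf g_less_iff[of 0 1]
    unfolding column_boundary_def by fastforce
  have "g 0 \<notin> ?S" using hi(2) by simp
  moreover from this have "(\<Sum>p\<in>?S. space_weight' p) = (\<Sum>p\<in>?S. space_weight p)"
    by (intro sum.cong refl space_weight'_eq) blast
  ultimately have "(\<Sum>p\<in>spaces_between lo hi. space_weight p) =
      space_weight (g 0) + (\<Sum>p\<in>?S. space_weight' p)"
    unfolding spaces using finite_spaces_columns(1) by simp
  moreover have "1 \<le> space_weight (g 0)" unfolding space_weight_left_space by (rule weight_L_ge_1)
  ultimately show "ell f' < ell f" unfolding ell_eq ell_f'_eq by simp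
  have "columns_between lo' hi' \<subset> columns_between lo hi"
  proof
    show "columns_between lo' hi' \<subseteq> columns_between lo hi" using assms lo by auto
    have "(g 0, g 1) \<in> columns_between lo hi" using leaf hi(1) \<open>lo < g 0\<close> by simp
    moreover have "(g 0, g 1) \<notin> columns_between lo' hi'" using hi(2) by (simp add: not_le)
    ultimately show "columns_between lo' hi' \<noteq> columns_between lo hi" by blast
  qed
  then show "support_size f' < support_size f"
    unfolding support_size_eq support_size_f'_eq by (intro psubset_card_mono finite_spaces_columns)
qed

lemma support_unchanged:
  assumes "lo' = lo" "hi' = hi"
  shows "support_size f' = support_size f"
    "ell f' < ell f \<longleftrightarrow> label_pair f (left_space f) = Some (L, L)
       \<or> (label_pair f (left_space f) = Some (L, I) \<and> current_tree f = Leaf)"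
proof -
  show "support_size f' = support_size f" unfolding support_size_eq support_size_f'_eq assms ..
  let ?S = "spaces_between lo hi"
  have rest: "(\<Sum>p\<in>?S - {g 0}. space_weight' p) = (\<Sum>p\<in>?S - {g 0}. space_weight p)"
    by (intro sum.cong refl space_weight'_eq) blast
  have "ell f' < ell f \<longleftrightarrow> g 0 \<in> ?S \<and> space_weight' (g 0) < space_weight (g 0)"
  proof (cases "g 0 \<in> ?S")
    case True
    then show ?thesis
      unfolding ell_eq ell_f'_eq assms using rest
        sum.remove[OF finite_spaces_columns(1) True, of space_weight]
        sum.remove[OF finite_spaces_columns(1) True, of space_weight'] by simp
  next
    case False
    then have "(\<Sum>p\<in>?S. space_weight' p) = (\<Sum>p\<in>?S. space_weight p)"
      by (intro sum.cong refl space_weight'_eq) blast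
    then show ?thesis unfolding ell_eq ell_f'_eq assms using False by auto
  qed
  also have "\<dots> \<longleftrightarrow> g 0 \<in> spaces_between lo hi \<and> (label B (g 0) = L \<or> (label B (g 0) = I \<and> T 0
    = Leaf))"
    unfolding space_weight_left_space space_weight'_left_space
    by (cases "label B (g 0)"; cases "T 0 = Leaf") simp_all
  finally show "ell f' < ell f \<longleftrightarrow> label_pair f (left_space f) = Some (L, L)
       \<or> (label_pair f (left_space f) = Some (L, I) \<and> current_tree f = Leaf)"
    unfolding label_pair_left_space current_tree_def by auto
qed

end

theorem corollary4p3p4:
  assumes "f \<in> thompsonF"
  shows "ell (inv x0 \<circ> f) < ell f \<longleftrightarrow>
           support_size (inv x0 \<circ> f) < support_size f
         \<or> label_pair f (left_space f) = Some (L, L)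
         \<or> (label_pair f (left_space f) = Some (L, I) \<and> current_tree f = Leaf)"
proof -
  interpret thompson_element f by standard (rule assms)
  consider (left) "lo' < lo" | (right) "hi' < hi" | (unchanged) "lo' = lo" "hi' = hi"
    using lo'_le_lo hi'_le_hi by fastforce
  then show ?thesis
  proof cases
    case left
    then show ?thesis using support_grows_left by (simp add: not_less)
  next
    case right
    then show ?thesis using support_shrinks_right by simp
  next
    case unchanged
    then show ?thesis using support_unchanged by simp
  qed
qed

end
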